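(* (a) Suppose $a'>a\ge0$, $b>c>0$ and $\delta>0$. Then the function \[ x\mapsto {}_2F_1(a+\delta,b;c;x)\,{}_2F_1(a',b;c;x)-{}_2F_1(a'+\delta,b;c;x)\,{}_2F_1(a,b;c;x) \] has positive power series coefficients, starting with the coefficient at $x^2$. (b) Let $\delta>0$. The function $a\mapsto{}_2F_1(a,b;c;x)$ is log-concave, i.e. ${}_2F_1(a+\delta,b;c;x)^2\ge {}_2F_1(a,b;c;x)\,{}_2F_1(a+2\delta,b;c;x)$, on $[0,\infty)$ when $0<x<1$, $b>c>0$, and when $x<0$, $c>0>b$; and on $(-\infty,c]$ when $0<x<1$, $c>0>b$, and when $x<0$, $b>c>0$. (c) Let $\delta>0$. For $0<x<1$: \[ \frac{\Gamma(a+\delta)\Gamma(a')}{\Gamma(a)\Gamma(a'+\delta)}<\frac{{}_2F_1(a'+\delta,b;c;x)\,{}_2F_1(a,b;c;x)}{{}_2F_1(a+\delta,b;c;x)\,{}_2F_1(a',b;c;x)}<1 \qquad (\ast) \] holds if $b>c>0$, $a'>a>0$, and \[ \frac{\Gamma(c-a-\delta)\Gamma(c-a')}{\Gamma(c-a)\Gamma(c-a'-\delta)}<\frac{{}_2F_1(a'+\delta,b;c;x)\,{}_2F_1(a,b;c;x)}{{}_2F_1(a+\delta,b;c;x)\,{}_2F_1(a',b;c;x)}<1 \qquad (\ast\ast) \] holds if $c>0>b$, $c-\delta>a'>a$. Further, for $x<0$, $(\ast)$ holds if $c>0>b$, $a'>a>0$, and $(\ast\ast)$ holds if $b>c>0$,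 $c-\delta>a'>a$.
   Context: $(a)_k=a(a+1)\cdots(a+k-1)$ is the Pochhammer symbol; the Gauss hypergeometric function is ${}_2F_1(a,b;c;x)=\sum_{k\ge0}\frac{(a)_k(b)_k}{(c)_k k!}x^k$ (for $x<0$ understood via analytic continuation, e.g. Pfaff's transformation). $\Gamma$ is Euler's gamma function. *)

theory Defs
  imports "HOL-Analysis.Analysis"
begin

definition hg_coef :: "real \<Rightarrow> real \<Rightarrow> real \<Rightarrow> nat \<Rightarrow> real" where
  "hg_coef a b c k = pochhammer a k * pochhammer b k / (pochhammer c k * fact k)"

text \<open>For x > -1 it is the power series (convergent for |x| < 1); for x \<le> -1 it is
  the analytic continuation given by Pfaff's transformation
  2F1(a,b;c;x) = (1-x)^(-b) 2F1(c-a,b;c;x/(x-1)), where x/(x-1) \<in> [1/2,1).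
  (Values for x \<ge> 1 are irrelevant and never used.)\<close>
definition hyp2f1 :: "real \<Rightarrow> real \<Rightarrow> real \<Rightarrow> real \<Rightarrow> real" where
  "hyp2f1 a b c x =
     (if x \<le> -1 then (1 - x) powr (-b) * (\<Sum>k. hg_coef (c - a) b c k * (x / (x - 1)) ^ k)
      else (\<Sum>k. hg_coef a b c k * x ^ k))"

end

theory Submission
  imports Defs "HOL-Computational_Algebra.Formal_Power_Series" "HOL-Real_Asymp.Real_Asymp"
begin

text \<open>
  For \<open>b > c > 0\<close>, \<open>n!\<close> times the \<open>n\<close>-th coefficient of the cross difference in (a) equals
  \<open>\<Sum>\<^sub>k binom(n,k) \<rho>\<^sub>k E\<^sub>k / 2\<close>, where \<open>\<rho>\<^sub>k = (b)\<^sub>k (b)\<^sub>n\<^sub>-\<^sub>k / ((c)\<^sub>k (c)\<^sub>n\<^sub>-\<^sub>k)\<close> increases strictly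
  towards the middle index and \<open>E\<^sub>k\<close> is a difference of symmetrised Pochhammer products.
  Vandermonde's identity gives \<open>\<Sum>\<^sub>k binom(n,k) E\<^sub>k = 0\<close>, and a comparison of consecutive
  indices shows that once \<open>E\<^sub>k \<ge> 0\<close> it stays so towards the middle, where it is positive; so the
  reweighting by \<open>\<rho>\<close> makes the sum positive. Evaluating at \<open>0 < x < 1\<close> gives (b) and the upper bound
  in (c); the lower bound comes from symmetrising a double series, using that \<open>\<Gamma>(u + \<delta>)/\<Gamma>(u)\<close>
  increases in \<open>u\<close>. All other parameter ranges reduce to these by Pfaff's and Euler's
  transformations.
\<close>

section \<open>The hypergeometric series\<close>

definition hg_series :: "real \<Rightarrow> real \<Rightarrow> real \<Rightarrow> real \<Rightarrow> real" where
  "hg_series a b c x = (\<Sum>k. hg_coef a b c k * x ^ k)"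

lemma hg_coef_0 [simp]: "hg_coef a b c 0 = 1"
  by (simp add: hg_coef_def)

lemma hg_coef_Suc:
  assumes "c > 0"
  shows "hg_coef a b c (Suc k) = hg_coef a b c k * ((a + k) * (b + k) / ((c + k) * (k + 1)))"
proof -
  have "pochhammer c k > 0" "c + k > 0" using assms by (simp_all add: pochhammer_pos)
  then show ?thesis
    unfolding hg_coef_def by (simp add: pochhammer_rec' field_simps)
qed

lemma hg_coef_commute: "hg_coef a b c k = hg_coef b a c k"
  by (simp add: hg_coef_def mult.commute)

lemma hg_series_commute: "hg_series a b c x = hg_series b a c x"
  by (simp add: hg_series_def hg_coef_commute)

lemma pochhammer_nonneg':
  fixes z :: "'a :: linordered_semidom"
  shows "0 \<le> z \<Longrightarrow> 0 \<le> pochhammer z k"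
  by (simp add: pochhammer_prod prod_nonneg)

lemma pochhammer_mono:
  fixes u :: "'a :: linordered_semidom"
  shows "0 \<le> u \<Longrightarrow> u \<le> v \<Longrightarrow> pochhammer u k \<le> pochhammer v k"
  unfolding pochhammer_prod by (intro prod_mono) auto

lemma abs_pochhammer_le: "\<bar>pochhammer (z::real) m\<bar> \<le> pochhammer \<bar>z\<bar> m"
proof -
  have "\<bar>pochhammer z m\<bar> = (\<Prod>i = 0..<m. \<bar>z + i\<bar>)" by (simp add: pochhammer_prod abs_prod)
  also have "\<dots> \<le> (\<Prod>i = 0..<m. \<bar>z\<bar> + i)" by (intro prod_mono) auto
  finally show ?thesis by (simp add: pochhammer_prod)
qed

lemma hg_coef_pos: "0 < a \<Longrightarrow> 0 < b \<Longrightarrow> 0 < c \<Longrightarrow> hg_coef a b c k > 0"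
  by (simp add: hg_coef_def pochhammer_pos)

lemma hg_coef_nonneg: "0 \<le> a \<Longrightarrow> 0 < b \<Longrightarrow> 0 < c \<Longrightarrow> hg_coef a b c k \<ge> 0"
  by (simp add: hg_coef_def pochhammer_pos pochhammer_nonneg')

lemma summable_abs_hg_terms:
  assumes "c > 0" "\<bar>x\<bar> < 1"
  shows "summable (\<lambda>k. \<bar>hg_coef a b c k * x ^ k\<bar>)"
proof -
  define q where "q = (1 + \<bar>x\<bar>) / 2"
  define \<rho> where "\<rho> k = \<bar>(a + real k) * (b + real k) / ((c + real k) * (real k + 1))\<bar> * \<bar>x\<bar>" for k :: nat
  have "(\<lambda>k::nat. (a + real k) * (b + real k) / ((c + real k) * (real k + 1))) \<longlonglongrightarrow> 1"
    by real_asymp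
  then have "\<rho> \<longlonglongrightarrow> 1 * \<bar>x\<bar>"
    unfolding \<rho>_def by (intro tendsto_intros tendsto_rabs[where l=1, simplified])
  moreover have "\<bar>x\<bar> < q" using assms by (simp add: q_def)
  ultimately obtain N where N: "\<And>k. k \<ge> N \<Longrightarrow> \<rho> k < q"
    using order_tendstoD(2) by (fastforce simp: eventually_at_top_linorder)
  show ?thesis
  proof (rule summable_ratio_test[of q N])
    show "q < 1" using assms by (simp add: q_def)
    fix k assume "N \<le> k"
    have "norm \<bar>hg_coef a b c (Suc k) * x ^ Suc k\<bar> = \<bar>hg_coef a b c k * x ^ k\<bar> * \<rho> k"
      by (simp only: hg_coef_Suc[OF assms(1)] \<rho>_def abs_mult abs_divide power_Suc) (simp add: mult_ac)
    also have "\<dots> \<le> \<bar>hg_coef a b c k * x ^ k\<bar> * q"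
      using N[OF \<open>N \<le> k\<close>] by (intro mult_left_mono) auto
    finally show "norm \<bar>hg_coef a b c (Suc k) * x ^ Suc k\<bar> \<le> q * norm \<bar>hg_coef a b c k * x ^ k\<bar>"
      by (simp add: mult.commute)
  qed
qed

lemma sums_hg_series:
  assumes "c > 0" "\<bar>x\<bar> < 1"
  shows "(\<lambda>k. hg_coef a b c k * x ^ k) sums hg_series a b c x"
  unfolding hg_series_def using summable_rabs_cancel[OF summable_abs_hg_terms[OF assms]]
  by (simp add: summable_sums)

lemma hg_series_pos:
  assumes "0 < c" "0 < b" "0 \<le> a" "0 \<le> y" "y < 1"
  shows "hg_series a b c y > 0"
proof -
  have "summable (\<lambda>k. hg_coef a b c k * y ^ k)"
    using sums_hg_series[of c y] assms by (simp add: sums_iff)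
  then have "(\<Sum>k<1. hg_coef a b c k * y ^ k) \<le> hg_series a b c y"
    unfolding hg_series_def by (rule sum_le_suminf) (use assms hg_coef_nonneg in auto)
  then show ?thesis by simp
qed

lemma Cauchy_product_power_series:
  fixes f g :: "nat \<Rightarrow> real"
  assumes "summable (\<lambda>k. norm (f k * x ^ k))" "summable (\<lambda>k. norm (g k * x ^ k))"
  shows "(\<lambda>n. (\<Sum>k\<le>n. f k * g (n - k)) * x ^ n) sums ((\<Sum>k. f k * x ^ k) * (\<Sum>k. g k * x ^ k))"
proof -
  have "(\<Sum>k\<le>n. f k * x ^ k * (g (n - k) * x ^ (n - k))) = (\<Sum>k\<le>n. f k * g (n - k)) * x ^ n" for n
    unfolding sum_distrib_right
  proof (intro sum.cong refl)
    fix k assume "k \<in> {..n}"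
    then have "x ^ k * x ^ (n - k) = x ^ n" by (simp flip: power_add)
    then show "f k * x ^ k * (g (n - k) * x ^ (n - k)) = f k * g (n - k) * x ^ n"
      by (metis mult.assoc mult.left_commute)
  qed
  with Cauchy_product_sums[OF assms] show ?thesis by simp
qed

lemma hg_series_mult:
  assumes "c > 0" "\<bar>x\<bar> < 1"
  shows "(\<lambda>n. (\<Sum>k\<le>n. hg_coef a b c k * hg_coef a' b' c (n - k)) * x ^ n)
           sums (hg_series a b c x * hg_series a' b' c x)"
  unfolding hg_series_def
  by (intro Cauchy_product_power_series) (use summable_abs_hg_terms[OF assms] in simp_all)

lemma hyp2f1_eq_hg_series: "x > -1 \<Longrightarrow> hyp2f1 a b c x = hg_series a b c x"
  by (simp add: hyp2f1_def hg_series_def)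

lemma hyp2f1_eq_Pfaff_series:
  "x \<le> -1 \<Longrightarrow> hyp2f1 a b c x = (1 - x) powr (-b) * hg_series (c - a) b c (x / (x - 1))"
  by (simp add: hyp2f1_def hg_series_def)

section \<open>Pfaff's and Euler's transformations\<close>

lemma pochhammer_minus_nat:
  assumes "k \<le> N"
  shows "pochhammer (- real N) k = (-1)^k * fact N / fact (N - k)"
proof -
  have "(real N gchoose k) = (-1)^k * pochhammer (- real N) k / fact k"
    by (rule gbinomial_pochhammer)
  moreover have "(real N gchoose k) = fact N / (fact k * fact (N - k))"
    using assms by (simp add: binomial_gbinomial[symmetric] binomial_fact)
  ultimately show ?thesis by (simp add: field_simps)
qed

lemma Chu_Vandermonde:
  fixes a c :: real
  assumes c: "c > 0"
  shows "(\<Sum>n\<le>N. pochhammer a n * (-1)^n / (pochhammer c n * fact n * fact (N - n)))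
       = pochhammer (c - a) N / (pochhammer c N * fact N)"
proof -
  have "\<forall>i\<in>{0..<N}. c \<noteq> - of_nat i"
    using c by (auto simp: minus_equation_iff[of c])
  then have "(\<Sum>k = 0..N. pochhammer a k * pochhammer (- of_nat N) k / (of_nat (fact k) * pochhammer c k))
     = pochhammer (c - a) N / pochhammer c N" by (rule Vandermonde_pochhammer)
  moreover have "(\<Sum>k = 0..N. pochhammer a k * pochhammer (- of_nat N) k / (of_nat (fact k) * pochhammer c k))
      = fact N * (\<Sum>n\<le>N. pochhammer a n * (-1)^n / (pochhammer c n * fact n * fact (N - n)))"
    unfolding atMost_atLeast0 sum_distrib_left
    by (intro sum.cong refl) (simp add: pochhammer_minus_nat field_simps)
  moreover have "pochhammer c N > 0" using c by (simp add: pochhammer_pos)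
  ultimately show ?thesis by (simp add: field_simps)
qed

lemma binomial_series_sums:
  fixes y \<beta> :: real
  assumes "\<bar>y\<bar> < 1"
  shows "(\<lambda>m. pochhammer \<beta> m / fact m * y ^ m) sums (1 - y) powr (- \<beta>)"
proof -
  have "((-\<beta>) gchoose m) * (-y)^m = pochhammer \<beta> m / fact m * y ^ m" for m
  proof -
    have "((-\<beta>) gchoose m) * (-y)^m = ((-1)^m * (-1)^m) * (pochhammer \<beta> m / fact m * y ^ m)"
      by (simp add: gbinomial_pochhammer power_minus[of y] field_simps)
    also have "(-1::real)^m * (-1)^m = 1" by (simp flip: power_add)
    finally show ?thesis by simp
  qed
  with gen_binomial_real[of "-y" "-\<beta>"] assms show ?thesis by simp
qed

lemma summable_on_pairs_nonneg:
  fixes M :: "nat \<Rightarrow> nat \<Rightarrow> real"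
  assumes nn: "\<And>n m. M n m \<ge> 0" and rows: "\<And>n. M n sums r n" and "summable r"
  shows "(\<lambda>(n,m). M n m) summable_on UNIV"
proof -
  have hs: "(M n has_sum r n) UNIV" for n by (rule sums_nonneg_imp_has_sum[OF rows nn])
  have "r n \<ge> 0" for n
    using rows[of n] nn by (metis sums_iff suminf_nonneg)
  then have "(\<lambda>n. norm (r n)) summable_on UNIV"
    using \<open>summable r\<close> by (simp add: summable_on_UNIV_nonneg_real_iff)
  moreover have norm_M: "(\<lambda>m. norm ((\<lambda>(n,m). M n m) (n, m))) = M n" for n
    using nn by (simp add: fun_eq_iff)
  moreover have "(\<lambda>n. infsum (\<lambda>m. norm ((\<lambda>(n,m). M n m) (n, m))) UNIV) = r"
    unfolding norm_M using hs by (simp add: fun_eq_iff infsumI)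
  ultimately have "(\<lambda>x. norm ((\<lambda>(n,m). M n m) x)) summable_on Sigma UNIV (\<lambda>_. UNIV)"
    using hs by (intro Infinite_Sum.abs_summable_on_Sigma_iff[THEN iffD2] conjI ballI)
      (simp_all only: summable_on_def, blast+)
  then show ?thesis
    using summable_on_iff_abs_summable_on_real[of "\<lambda>(n,m). M n m" UNIV] by simp
qed

lemma summable_on_pairs_sums:
  fixes T :: "nat \<Rightarrow> nat \<Rightarrow> real"
  assumes S: "(\<lambda>(n,m). T n m) summable_on UNIV"
  shows "(\<lambda>n. \<Sum>m. T n m) sums infsum (\<lambda>(n,m). T n m) UNIV"
    and "(\<lambda>N. \<Sum>n\<le>N. T n (N - n)) sums infsum (\<lambda>(n,m). T n m) UNIV"
proof -
  have S': "(\<lambda>(n,m). T n m) summable_on Sigma UNIV (\<lambda>_. UNIV)" using S by simp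
  have rowsum: "T n summable_on UNIV" for n
    by (rule summable_on_SigmaD1[OF S']) simp
  have rowinf: "infsum (T n) UNIV = (\<Sum>m. T n m)" for n
    using has_sum_imp_sums[OF has_sum_infsum[OF rowsum[of n]]] by (simp add: sums_iff)
  have "(\<lambda>n. infsum (T n) UNIV) summable_on UNIV" by (rule summable_on_Sigma_banach[OF S'])
  moreover have "infsum (\<lambda>n. infsum (T n) UNIV) UNIV = infsum (\<lambda>(n,m). T n m) UNIV"
    using infsum_Sigma'_banach[OF S'] by simp
  ultimately have "((\<lambda>n. infsum (T n) UNIV) has_sum infsum (\<lambda>(n,m). T n m) UNIV) UNIV"
    by (metis has_sum_infsum)
  from has_sum_imp_sums[OF this] show "(\<lambda>n. \<Sum>m. T n m) sums infsum (\<lambda>(n,m). T n m) UNIV"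
    by (simp add: rowinf)
  define g where "g = (\<lambda>(N::nat, n::nat). (n, N - n))"
  have bij: "bij_betw g (Sigma UNIV (\<lambda>N. {..N})) UNIV"
    by (rule bij_betwI[where g="\<lambda>(n, m). (n + m, n)"]) (auto simp: g_def)
  have S2: "(\<lambda>(N, n). T n (N - n)) summable_on Sigma UNIV (\<lambda>N. {..N})"
  proof -
    have "(\<lambda>x. (\<lambda>(n,m). T n m) (g x)) summable_on Sigma UNIV (\<lambda>N. {..N})"
      using summable_on_reindex_bij_betw[OF bij, of "\<lambda>(n,m). T n m"] S by simp
    then show ?thesis by (simp add: g_def case_prod_unfold)
  qed
  have "infsum (\<lambda>x. (\<lambda>(n,m). T n m) (g x)) (Sigma UNIV (\<lambda>N. {..N})) = infsum (\<lambda>(n,m). T n m) UNIV"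
    by (rule infsum_reindex_bij_betw[OF bij])
  then have I2: "infsum (\<lambda>(N, n). T n (N - n)) (Sigma UNIV (\<lambda>N. {..N})) = infsum (\<lambda>(n,m). T n m) UNIV"
    by (simp add: g_def case_prod_unfold)
  have "(\<lambda>N. infsum (\<lambda>n. T n (N - n)) {..N}) summable_on UNIV"
    using summable_on_Sigma_banach[of "\<lambda>N n. T n (N - n)" UNIV "\<lambda>N. {..N}"] S2 by simp
  moreover have "infsum (\<lambda>N. infsum (\<lambda>n. T n (N - n)) {..N}) UNIV = infsum (\<lambda>(n,m). T n m) UNIV"
    using infsum_Sigma'_banach[of "\<lambda>N n. T n (N - n)" UNIV "\<lambda>N. {..N}"] S2 I2 by simp
  ultimately have "((\<lambda>N. infsum (\<lambda>n. T n (N - n)) {..N}) has_sum infsum (\<lambda>(n,m). T n m) UNIV) UNIV"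
    by (metis has_sum_infsum)
  from has_sum_imp_sums[OF this] show "(\<lambda>N. \<Sum>n\<le>N. T n (N - n)) sums infsum (\<lambda>(n,m). T n m) UNIV"
    by simp
qed

lemma powr_minus_add_nat:
  fixes q e :: real
  assumes "q > 0"
  shows "q powr (-(e + real n)) = q powr (-e) / q ^ n"
proof -
  have "q powr (-(e + real n)) = q powr (-e) * q powr (- real n)" by (simp add: powr_add[symmetric])
  also have "q powr (- real n) = 1 / q ^ n" using assms by (simp add: powr_minus_divide powr_realpow)
  finally show ?thesis by simp
qed

text \<open>Pfaff's transformation comes from expanding each \<open>(x/(x-1))^n = (-y)^n (1-y)^(-n)\<close>,
  \<open>y = x/(x-1)\<close>, by the binomial series and collecting the double series along anti-diagonals,
  where the Chu--Vandermonde identity sums the inner terms.\<close>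

definition pfaff_term :: "real \<Rightarrow> real \<Rightarrow> real \<Rightarrow> real \<Rightarrow> nat \<Rightarrow> nat \<Rightarrow> real" where
  "pfaff_term a b c y n m = hg_coef a b c n * (-y)^n * (pochhammer (b + n) m / fact m * y ^ m)"

lemma pfaff_term_row_sums:
  assumes "0 \<le> y" "y < 1"
  shows "pfaff_term a b c y n sums ((1 - y) powr (-b) * (hg_coef a b c n * (-y / (1 - y))^n))"
proof -
  have "pfaff_term a b c y n sums (hg_coef a b c n * (-y)^n * (1 - y) powr (-(b + n)))"
    unfolding pfaff_term_def using assms by (intro sums_mult binomial_series_sums) simp
  moreover have "(1 - y) powr (-(b + n)) = (1 - y) powr (-b) / (1 - y) ^ n"
    using assms by (intro powr_minus_add_nat) simp
  ultimately show ?thesis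
    using assms by (simp only: power_divide) (simp add: field_simps)
qed

lemma pfaff_term_diagonal_sum:
  assumes "c > 0"
  shows "(\<Sum>n\<le>N. pfaff_term a b c y n (N - n)) = hg_coef (c - a) b c N * y ^ N"
proof -
  have "(\<Sum>n\<le>N. pfaff_term a b c y n (N - n)) = (\<Sum>n\<le>N. y^N * pochhammer b N *
          (pochhammer a n * (-1)^n / (pochhammer c n * fact n * fact (N - n))))"
  proof (intro sum.cong refl)
    fix n assume "n \<in> {..N}"
    then have nN: "n \<le> N" by simp
    have pb: "pochhammer b N = pochhammer b n * pochhammer (b + n) (N - n)"
      using pochhammer_product[OF nN, of b] by simp
    have yy: "y ^ n * y ^ (N - n) = y ^ N" using nN by (simp flip: power_add)
    show "pfaff_term a b c y n (N - n) = y^N * pochhammer b N *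
        (pochhammer a n * (-1)^n / (pochhammer c n * fact n * fact (N - n)))"
      unfolding pfaff_term_def hg_coef_def pb yy[symmetric] by (simp add: power_minus[of y] field_simps)
  qed
  also have "\<dots> = y^N * pochhammer b N * (pochhammer (c - a) N / (pochhammer c N * fact N))"
    by (simp only: sum_distrib_left[symmetric] Chu_Vandermonde[OF assms])
  finally show ?thesis by (simp add: hg_coef_def field_simps)
qed

lemma pfaff_term_summable:
  assumes c: "c > 0" and y: "0 \<le> y" "y < 1/2"
  shows "(\<lambda>(n,m). pfaff_term a b c y n m) summable_on UNIV"
proof -
  define M where "M n m = \<bar>hg_coef a b c n\<bar> * y^n * (pochhammer (\<bar>b\<bar> + n) m / fact m * y ^ m)" for n m
  define q where "q = y / (1 - y)"
  have q: "\<bar>q\<bar> < 1" using y by (simp add: q_def)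
  have "M n sums (\<bar>hg_coef a b c n\<bar> * y^n * (1 - y) powr (-(\<bar>b\<bar> + n)))" for n
    unfolding M_def using y by (intro sums_mult binomial_series_sums) simp
  moreover have "(1 - y) powr (-(\<bar>b\<bar> + n)) = (1 - y) powr (-\<bar>b\<bar>) / (1 - y) ^ n" for n
    using y by (intro powr_minus_add_nat) simp
  ultimately have rows: "M n sums ((1 - y) powr (-\<bar>b\<bar>) * (\<bar>hg_coef a b c n\<bar> * \<bar>q\<bar>^n))" for n
    using y by (simp only: q_def power_abs abs_divide power_divide) (simp add: field_simps)
  have "summable (\<lambda>n. (1 - y) powr (-\<bar>b\<bar>) * (\<bar>hg_coef a b c n\<bar> * \<bar>q\<bar>^n))"
    using summable_abs_hg_terms[OF c q, of a b] by (intro summable_mult) (simp add: abs_mult power_abs)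
  then have M: "(\<lambda>(n,m). M n m) summable_on UNIV"
    by (intro summable_on_pairs_nonneg[OF _ rows]) (use y in \<open>simp_all add: M_def pochhammer_nonneg'\<close>)
  have "norm (pfaff_term a b c y n m) \<le> M n m" for n m
  proof -
    have "\<bar>pochhammer (b + n) m\<bar> \<le> pochhammer \<bar>b + n\<bar> m" by (rule abs_pochhammer_le)
    also have "\<dots> \<le> pochhammer (\<bar>b\<bar> + n) m" by (rule pochhammer_mono) auto
    finally have "\<bar>pochhammer (b + n) m\<bar> \<le> pochhammer (\<bar>b\<bar> + n) m" .
    then have "(\<bar>hg_coef a b c n\<bar> * y^n * y^m / fact m) * \<bar>pochhammer (b + n) m\<bar>
        \<le> (\<bar>hg_coef a b c n\<bar> * y^n * y^m / fact m) * pochhammer (\<bar>b\<bar> + n) m"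
      using y by (intro mult_left_mono) auto
    then show ?thesis using y by (simp add: pfaff_term_def M_def abs_mult power_abs mult_ac)
  qed
  then have "(\<lambda>p. norm ((\<lambda>(n,m). pfaff_term a b c y n m) p)) summable_on UNIV"
    by (intro summable_on_comparison_test[OF M]) (auto split: prod.splits)
  then show ?thesis by (rule abs_summable_summable)
qed

lemma Pfaff_transformation:
  fixes a b c x :: real
  assumes c: "c > 0" and x: "-1 < x" "x \<le> 0"
  shows "hg_series a b c x = (1 - x) powr (-b) * hg_series (c - a) b c (x / (x - 1))"
proof -
  define y where "y = x / (x - 1)"
  have y: "0 \<le> y" "y < 1/2" using x by (simp_all add: y_def divide_nonpos_neg divide_less_eq)
  have xy: "- (y / (1 - y)) = x" and omy: "1 - y = 1 / (1 - x)"
    using x by (simp_all add: y_def field_simps)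
  define I where "I = infsum (\<lambda>(n,m). pfaff_term a b c y n m) UNIV"
  note DS = summable_on_pairs_sums[OF pfaff_term_summable[OF c y, of a b], folded I_def]
  have "(\<Sum>m. pfaff_term a b c y n m) = (1 - y) powr (-b) * (hg_coef a b c n * x^n)" for n
    using pfaff_term_row_sums[of y a b c n] y by (simp add: sums_iff xy)
  with DS(1) have "(\<lambda>n. (1 - y) powr (-b) * (hg_coef a b c n * x^n)) sums I" by simp
  moreover have "(\<lambda>n. (1 - y) powr (-b) * (hg_coef a b c n * x^n)) sums ((1 - y) powr (-b) * hg_series a b c x)"
    using x by (intro sums_mult sums_hg_series c) simp
  ultimately have I1: "I = (1 - y) powr (-b) * hg_series a b c x" using sums_unique2 by blast
  have "(\<lambda>N. hg_coef (c - a) b c N * y ^ N) sums I"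
    using DS(2) by (simp add: pfaff_term_diagonal_sum[OF c])
  moreover have "(\<lambda>N. hg_coef (c - a) b c N * y ^ N) sums hg_series (c - a) b c y"
    using y by (intro sums_hg_series c) simp
  ultimately have I2: "I = hg_series (c - a) b c y" using sums_unique2 by blast
  have "hg_series a b c x = (1 - y) powr b * ((1 - y) powr (-b) * hg_series a b c x)"
    using y by (simp add: powr_minus field_simps)
  also have "\<dots> = (1 - x) powr (-b) * hg_series (c - a) b c y"
    using x I1 I2 by (simp add: omy powr_divide powr_minus_divide)
  finally show ?thesis by (simp add: y_def)
qed

lemma powser_coeff_0_eq_0:
  fixes u :: "nat \<Rightarrow> real"
  assumes r: "r > 0"
    and summable: "\<And>y. \<bar>y\<bar> < r \<Longrightarrow> summable (\<lambda>n. u n * y ^ n)"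
    and zero: "\<And>y. 0 < y \<Longrightarrow> y < r \<Longrightarrow> (\<Sum>n. u n * y ^ n) = 0"
  shows "u 0 = 0"
proof -
  define f where "f x = (\<Sum>n. u n * x ^ n)" for x :: real
  have "(f \<longlongrightarrow> u 0) (at 0)"
    using summable by (intro powser_limit_0_strong[OF r]) (simp add: f_def summable_sums)
  then have "(f \<longlongrightarrow> u 0) (at_right 0)" by (rule tendsto_within_subset) simp
  moreover have "eventually (\<lambda>x. f x = 0) (at_right (0::real))"
    unfolding eventually_at_right_field using r zero by (auto simp: f_def intro!: exI[of _ r])
  then have "(f \<longlongrightarrow> 0) (at_right 0)" by (rule tendsto_eventually)
  ultimately show ?thesis using tendsto_unique by force
qed

lemma powser_coeffs_eq_0:
  fixes u :: "nat \<Rightarrow> real"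
  assumes r: "r > 0"
    and "\<And>y. \<bar>y\<bar> < r \<Longrightarrow> summable (\<lambda>n. u n * y ^ n)"
    and "\<And>y. 0 < y \<Longrightarrow> y < r \<Longrightarrow> (\<Sum>n. u n * y ^ n) = 0"
  shows "u n = 0"
  using assms(2,3)
proof (induction n arbitrary: u)
  case 0
  then show ?case using powser_coeff_0_eq_0[OF r] by blast
next
  case (Suc n)
  have u0: "u 0 = 0" using Suc.prems powser_coeff_0_eq_0[OF r] by blast
  have "(\<lambda>n. u (Suc n)) n = 0"
  proof (rule Suc.IH)
    fix y :: real assume "\<bar>y\<bar> < r"
    show "summable (\<lambda>n. u (Suc n) * y ^ n)" using powser_split_head(3)[OF Suc.prems(1)[OF \<open>\<bar>y\<bar> < r\<close>]] .
  next
    fix y :: real assume y: "0 < y" "y < r"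
    then have "(\<Sum>n. u (Suc n) * y ^ n) * y = (\<Sum>n. u n * y ^ n) - u 0"
      by (intro powser_split_head(2) Suc.prems(1)) simp
    then show "(\<Sum>n. u (Suc n) * y ^ n) = 0" using Suc.prems(2)[OF y] u0 y by simp
  qed
  then show ?case by simp
qed

lemma binomial_hg_product_sums:
  assumes c: "c > 0" and t: "\<bar>t\<bar> < 1"
  shows "(\<lambda>N. (\<Sum>i\<le>N. pochhammer e i / fact i * hg_coef a b c (N - i)) * t ^ N)
           sums ((1 - t) powr (-e) * hg_series a b c t)"
proof -
  have s1: "summable (\<lambda>i. norm (pochhammer e i / fact i * t ^ i))"
  proof (rule summable_comparison_test)
    show "summable (\<lambda>n. pochhammer \<bar>e\<bar> n / fact n * \<bar>t\<bar> ^ n)"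
      using binomial_series_sums[of "\<bar>t\<bar>" "\<bar>e\<bar>"] t by (simp add: sums_iff)
    have "\<bar>pochhammer e n\<bar> / fact n * \<bar>t\<bar> ^ n \<le> pochhammer \<bar>e\<bar> n / fact n * \<bar>t\<bar> ^ n" for n
      by (intro mult_right_mono divide_right_mono abs_pochhammer_le) auto
    then show "\<exists>N. \<forall>n\<ge>N. norm (norm (pochhammer e n / fact n * t ^ n)) \<le> pochhammer \<bar>e\<bar> n / fact n * \<bar>t\<bar> ^ n"
      by (simp add: abs_mult power_abs)
  qed
  moreover have "summable (\<lambda>k. norm (hg_coef a b c k * t ^ k))"
    using summable_abs_hg_terms[OF c t] by simp
  ultimately have "(\<lambda>N. (\<Sum>i\<le>N. pochhammer e i / fact i * hg_coef a b c (N - i)) * t ^ N)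
      sums ((\<Sum>i. pochhammer e i / fact i * t ^ i) * hg_series a b c t)"
    unfolding hg_series_def by (rule Cauchy_product_power_series)
  moreover have "(\<Sum>i. pochhammer e i / fact i * t ^ i) = (1 - t) powr (-e)"
    using binomial_series_sums[OF t, of e] by (simp add: sums_iff)
  ultimately show ?thesis by simp
qed

lemma Euler_transformation_small:
  fixes a b c y :: real
  assumes c: "c > 0" and y: "0 \<le> y" "y < 1/2"
  shows "hg_series a b c y = (1 - y) powr (c - a - b) * hg_series (c - a) (c - b) c y"
proof -
  define z where "z = y / (y - 1)"
  have z: "-1 < z" "z \<le> 0" "z / (z - 1) = y" and omz: "1 - z = 1 / (1 - y)"
    using y by (simp_all add: z_def less_divide_eq divide_nonneg_neg field_simps)
  have "hg_series (c - a) b c z = (1 - z) powr (-b) * hg_series a b c y"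
    using Pfaff_transformation[OF c z(1,2), of "c - a" b] by (simp add: z(3))
  moreover have "hg_series (c - a) b c z = (1 - z) powr (a - c) * hg_series (c - a) (c - b) c y"
    using Pfaff_transformation[OF c z(1,2), of b "c - a"]
    by (simp add: z(3) hg_series_commute[of b] hg_series_commute[of "c - b"])
  moreover have "0 < 1 - z" using z by simp
  ultimately have "hg_series a b c y = (1 - z) powr (a + b - c) * hg_series (c - a) (c - b) c y"
    by (simp add: powr_minus powr_add powr_diff field_simps)
  also have "(1 - z) powr (a + b - c) = 1 / (1 - y) powr (a + b - c)"
    using y by (simp add: omz powr_divide)
  also have "\<dots> = (1 - y) powr (- (a + b - c))"
    by (rule powr_minus_divide[symmetric])
  finally show ?thesis by (simp add: algebra_simps)
qed

text \<open>Both sides are power series in \<open>y\<close> on \<open>|y| < 1\<close>; they agree for small \<open>y > 0\<close>, hence everywhere.\<close>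

lemma Euler_transformation:
  fixes a b c y :: real
  assumes c: "c > 0" and y: "0 \<le> y" "y < 1"
  shows "hg_series a b c y = (1 - y) powr (c - a - b) * hg_series (c - a) (c - b) c y"
proof -
  define E where "E N = (\<Sum>i\<le>N. pochhammer (a + b - c) i / fact i * hg_coef (c - a) (c - b) c (N - i))" for N
  have exponent: "- (a + b - c) = c - a - b" by simp
  have RHS: "(\<lambda>N. E N * t ^ N) sums ((1 - t) powr (c - a - b) * hg_series (c - a) (c - b) c t)"
    if "\<bar>t\<bar> < 1" for t
    using binomial_hg_product_sums[OF c that, of "a + b - c" "c - a" "c - b", unfolded exponent]
    unfolding E_def .
  define u where "u N = hg_coef a b c N - E N" for N
  have u_sums: "(\<lambda>n. u n * t ^ n) sums (hg_series a b c t - (1 - t) powr (c - a - b) * hg_series (c - a) (c - b) c t)"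
    if "\<bar>t\<bar> < 1" for t
    unfolding u_def left_diff_distrib by (intro sums_diff sums_hg_series[OF c that] RHS[OF that])
  have "u N = 0" for N
  proof (rule powser_coeffs_eq_0[of "1/2"])
    fix t :: real assume "\<bar>t\<bar> < 1/2"
    then show "summable (\<lambda>n. u n * t ^ n)" using u_sums[of t] by (simp add: sums_iff)
  next
    fix t :: real assume "0 < t" "t < 1/2"
    then show "(\<Sum>n. u n * t ^ n) = 0"
      using u_sums[of t] Euler_transformation_small[OF c, of t a b] by (simp add: sums_iff)
  qed simp
  then have "(\<lambda>N. hg_coef a b c N * y ^ N) sums ((1 - y) powr (c - a - b) * hg_series (c - a) (c - b) c y)"
    using RHS[of y] y by (simp add: u_def)
  moreover have "(\<lambda>N. hg_coef a b c N * y ^ N) sums hg_series a b c y"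
    using y by (intro sums_hg_series c) simp
  ultimately show ?thesis by (metis sums_unique2)
qed

lemma Pfaff_variable_bounds:
  assumes "x < (0::real)"
  shows "0 < x / (x - 1)" "x / (x - 1) < 1"
  using assms by (simp_all add: zero_less_divide_iff divide_less_eq)

lemma hyp2f1_neg_eq_Pfaff:
  assumes c: "c > 0" and x: "x < 0"
  shows "hyp2f1 a b c x = (1 - x) powr (-b) * hg_series (c - a) b c (x / (x - 1))"
proof (cases "x \<le> -1")
  case True
  then show ?thesis by (rule hyp2f1_eq_Pfaff_series)
next
  case False
  then show ?thesis using Pfaff_transformation[OF c, of x a b] x hyp2f1_eq_hg_series[of x a b c] by simp
qed

lemma hyp2f1_neg_eq_Pfaff_Euler:
  assumes c: "c > 0" and x: "x < 0"
  shows "hyp2f1 a b c x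
           = (1 - x) powr (-b) * (1 - x / (x - 1)) powr (a - b) * hg_series a (c - b) c (x / (x - 1))"
  using hyp2f1_neg_eq_Pfaff[OF assms, of a b] Euler_transformation[OF c, of "x / (x - 1)" "c - a" b]
    Pfaff_variable_bounds[OF x] by simp

lemma hyp2f1_eq_Euler:
  assumes c: "c > 0" and x: "0 \<le> x" "x < 1"
  shows "hyp2f1 a b c x = (1 - x) powr (c - a - b) * hg_series (c - a) (c - b) c x"
  using hyp2f1_eq_hg_series[of x a b c] Euler_transformation[OF c x, of a b] x by simp

section \<open>Positivity of the coefficients of the cross difference\<close>

lemma shifted_product_le:
  fixes s1 t1 s2 t2 i :: real
  assumes "s1 + t1 = s2 + t2" "s2 * t2 \<le> s1 * t1"
  shows "(s2 + i) * (t2 + i) \<le> (s1 + i) * (t1 + i)"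
proof -
  have "(s + i) * (t + i) = s * t + i * (s + t) + i * i" for s t by (simp add: algebra_simps)
  then show ?thesis using assms by simp
qed

lemma shifted_product_less:
  fixes s1 t1 s2 t2 i :: real
  assumes "s1 + t1 = s2 + t2" "s2 * t2 < s1 * t1"
  shows "(s2 + i) * (t2 + i) < (s1 + i) * (t1 + i)"
proof -
  have "(s + i) * (t + i) = s * t + i * (s + t) + i * i" for s t by (simp add: algebra_simps)
  then show ?thesis using assms by simp
qed

lemma pochhammer_pair_le:
  fixes s1 t1 s2 t2 :: real
  assumes "s1 + t1 = s2 + t2" "s2 * t2 \<le> s1 * t1" "0 \<le> s2" "0 \<le> t2"
  shows "pochhammer s2 k * pochhammer t2 k \<le> pochhammer s1 k * pochhammer t1 k"
proof -
  have "(\<Prod>i = 0..<k. (s2 + i) * (t2 + i)) \<le> (\<Prod>i = 0..<k. (s1 + i) * (t1 + i))"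
    using assms by (intro prod_mono conjI shifted_product_le) auto
  then show ?thesis by (simp add: pochhammer_prod prod.distrib)
qed

lemma pochhammer_pair_less:
  fixes s1 t1 s2 t2 :: real
  assumes "s1 + t1 = s2 + t2" "s2 * t2 < s1 * t1" "0 \<le> s2" "0 \<le> t2" "k \<ge> 1"
  shows "pochhammer s2 k * pochhammer t2 k < pochhammer s1 k * pochhammer t1 k"
proof -
  have less: "(s2 + i) * (t2 + i) < (s1 + i) * (t1 + i)" for i :: nat
    using shifted_product_less[OF assms(1,2)] .
  have nonneg: "0 \<le> (s2 + i) * (t2 + i)" for i :: nat using assms by simp
  have "(\<Prod>i = 0..<k. (s2 + i) * (t2 + i)) < (\<Prod>i = 0..<k. (s1 + i) * (t1 + i))"
  proof (rule prod_mono_strict[of 0])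
    show "0 \<in> {0..<k}" using assms by simp
    show "(s2 + of_nat 0) * (t2 + of_nat 0) < (s1 + of_nat 0) * (t1 + of_nat 0)" by (rule less)
    fix i assume "i \<in> {0..<k}"
    show "0 \<le> (s2 + i) * (t2 + i) \<and> (s2 + i) * (t2 + i) \<le> (s1 + i) * (t1 + i)"
      using nonneg[of i] less[of i] by simp
    show "0 < (s1 + i) * (t1 + i)" using nonneg[of i] less[of i] by linarith
  qed simp
  then show ?thesis by (simp add: pochhammer_prod prod.distrib)
qed

lemma pochhammer_cross_le:
  fixes s1 t1 s2 t2 :: real
  assumes "s2 - s1 = t1 - t2" "s1 \<le> s2" "0 \<le> s1" "0 \<le> t2"
  shows "pochhammer (s1 + 1) r * pochhammer (t2 + 1) r \<le> pochhammer (s2 + 1) r * pochhammer (t1 + 1) r"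
proof -
  have "(s1 + 1 + i) * (t2 + 1 + i) \<le> (s2 + 1 + i) * (t1 + 1 + i)" for i :: nat
  proof -
    define d where "d = s2 - s1"
    have "s2 = s1 + d" "t1 = t2 + d" using assms by (simp_all add: d_def)
    then have "(s2 + 1 + i) * (t1 + 1 + i) - (s1 + 1 + i) * (t2 + 1 + i) = d * (s1 + 1 + i) + d * (t2 + 1 + i) + d * d"
      by (simp add: algebra_simps)
    moreover have "d \<ge> 0" using assms by (simp add: d_def)
    moreover have "0 \<le> d * (s1 + 1 + i) + d * (t2 + 1 + i) + d * d" using \<open>d \<ge> 0\<close> assms by simp
    ultimately show ?thesis by linarith
  qed
  then have "(\<Prod>i = 0..<r. (s1 + 1 + i) * (t2 + 1 + i)) \<le> (\<Prod>i = 0..<r. (s2 + 1 + i) * (t1 + 1 + i))"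
    using assms by (intro prod_mono conjI) auto
  then show ?thesis by (simp add: pochhammer_prod prod.distrib)
qed

lemma bracket_ineq_left:
  fixes A B X1 Y1 X2 Y2 :: real
  assumes "B \<le> A" "X1 * Y2 \<le> X2 * Y1"
  shows "(A * X1 + B * Y1) * (X2 + Y2) \<le> (A * X2 + B * Y2) * (X1 + Y1)"
proof -
  have "(A * X2 + B * Y2) * (X1 + Y1) - (A * X1 + B * Y1) * (X2 + Y2) = (A - B) * (X2 * Y1 - X1 * Y2)"
    by (simp add: algebra_simps)
  moreover have "(A - B) * (X2 * Y1 - X1 * Y2) \<ge> 0" using assms by simp
  ultimately show ?thesis by simp
qed

text \<open>With \<open>\<sigma>\<^sub>1 + \<tau>\<^sub>1 = \<sigma>\<^sub>2 + \<tau>\<^sub>2\<close> and \<open>\<sigma>\<^sub>2 \<ge> \<sigma>\<^sub>1 \<ge> \<tau>\<^sub>1 \<ge> \<tau>\<^sub>2 \<ge> 0\<close>, this compares the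
  factorisations of \<open>symm_poch\<close> at \<open>k\<close> and \<open>k + 1\<close> given below.\<close>

lemma bracket_ineq:
  fixes s1 t1 s2 t2 mu X1 Y1 X2 Y2 :: real
  assumes sum: "s1 + t1 = s2 + t2" and ord: "s2 \<ge> s1" "s1 \<ge> t1" "t1 \<ge> t2" "t2 \<ge> 0"
    and mu: "mu \<ge> 0"
    and XY: "Y2 \<ge> 0" "X2 \<ge> Y2" "Y1 \<ge> 0" "X1 \<ge> Y1" "X2 * Y1 \<ge> X1 * Y2"
  shows "(s1 * (s1 + mu) * X1 + t1 * (t1 + mu) * Y1) * (s2 * t2 * (X2 + Y2))
       \<le> s1 * t1 * (X1 + Y1) * (s2 * (s2 + mu) * X2 + t2 * (t2 + mu) * Y2)"
proof -
  define A1 B1 A2 B2 P1 P2 where "A1 = s1 * (s1 + mu)" and "B1 = t1 * (t1 + mu)"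
    and "A2 = s2 * (s2 + mu)" and "B2 = t2 * (t2 + mu)" and "P1 = s1 * t1" and "P2 = s2 * t2"
  have t1: "t1 = s2 + t2 - s1" using sum by simp
  have P2: "0 \<le> P2" "P2 \<le> P1"
  proof -
    have "P1 - P2 = (s2 - s1) * (s1 - t2)" unfolding P1_def P2_def t1 by (simp add: algebra_simps)
    moreover have "(s2 - s1) * (s1 - t2) \<ge> 0" using ord by simp
    ultimately show "P2 \<le> P1" by simp
  qed (use ord in \<open>simp add: P2_def\<close>)
  have step1: "(A1 * X1 + B1 * Y1) * (X2 + Y2) \<le> (A1 * X2 + B1 * Y2) * (X1 + Y1)"
    using ord mu XY by (intro bracket_ineq_left) (auto simp: A1_def B1_def intro: mult_mono)
  have d1: "P1 * A2 - P2 * A1 \<ge> 0"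
  proof -
    have "P1 * A2 - P2 * A1 = s1 * s2 * ((t1 - t2) * (s2 + mu) + t2 * (s2 - s1))"
      unfolding P1_def P2_def A1_def A2_def by (simp add: algebra_simps)
    then show ?thesis using ord mu by simp
  qed
  have d12: "(P1 * A2 - P2 * A1) + (P1 * B2 - P2 * B1) \<ge> 0"
  proof -
    define K where "K = (s2 + t2) * (s2 + t2) + mu * (s2 + t2)"
    have K: "A1 + B1 = K - 2 * P1" "A2 + B2 = K - 2 * P2"
      unfolding A1_def B1_def A2_def B2_def P1_def P2_def K_def t1 by (simp_all add: algebra_simps)
    have "(P1 * A2 - P2 * A1) + (P1 * B2 - P2 * B1) = P1 * (A2 + B2) - P2 * (A1 + B1)"
      by (simp add: algebra_simps)
    also have "\<dots> = K * (P1 - P2)" by (simp add: K algebra_simps)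
    finally show ?thesis using P2 mu ord unfolding K_def by simp
  qed
  have step2: "P2 * (A1 * X2 + B1 * Y2) \<le> P1 * (A2 * X2 + B2 * Y2)"
  proof -
    have "P1 * (A2 * X2 + B2 * Y2) - P2 * (A1 * X2 + B1 * Y2)
        = X2 * (P1 * A2 - P2 * A1) + Y2 * (P1 * B2 - P2 * B1)" by (simp add: algebra_simps)
    also have "\<dots> \<ge> Y2 * ((P1 * A2 - P2 * A1) + (P1 * B2 - P2 * B1))"
      using d1 XY by (simp add: distrib_left mult_right_mono)
    finally show ?thesis using d12 XY by (smt (verit) mult_nonneg_nonneg)
  qed
  have "(A1 * X1 + B1 * Y1) * (P2 * (X2 + Y2)) \<le> P2 * ((A1 * X2 + B1 * Y2) * (X1 + Y1))"
    using mult_left_mono[OF step1 P2(1)] by (simp add: mult_ac)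
  also have "\<dots> \<le> (X1 + Y1) * (P1 * (A2 * X2 + B2 * Y2))"
    using mult_left_mono[OF step2, of "X1 + Y1"] XY by (simp add: mult_ac)
  finally show ?thesis unfolding A1_def B1_def A2_def B2_def P1_def P2_def by (simp add: mult_ac)
qed

definition symm_poch :: "real \<Rightarrow> real \<Rightarrow> nat \<Rightarrow> nat \<Rightarrow> real" where
  "symm_poch s t n k = pochhammer s k * pochhammer t (n - k) + pochhammer s (n - k) * pochhammer t k"

lemma symm_poch_commute: "symm_poch s t n k = symm_poch t s n k"
  by (simp add: symm_poch_def mult.commute add.commute)

lemma symm_poch_reflect: "k \<le> n \<Longrightarrow> symm_poch s t n (n - k) = symm_poch s t n k"
  by (simp add: symm_poch_def add.commute)

lemma symm_poch_min_reflect: "k \<le> n \<Longrightarrow> symm_poch s t n (min k (n - k)) = symm_poch s t n k"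
  by (cases "k \<le> n - k") (simp_all add: min_def symm_poch_reflect)

lemma symm_poch_factor:
  assumes "n = 2 * k + r + 2"
  shows "symm_poch s t n k = pochhammer s k * pochhammer t k *
     ((s + k) * (s + k + (r + 1)) * pochhammer (s + k + 1) r + (t + k) * (t + k + (r + 1)) * pochhammer (t + k + 1) r)"
proof -
  have "pochhammer z (k + Suc (Suc r)) = pochhammer z k * ((z + k) * (z + k + (r + 1)) * pochhammer (z + k + 1) r)"
    for z :: real
    by (simp only: pochhammer_product' pochhammer_rec[of "z + k"] pochhammer_rec'[of "z + k + 1"])
      (simp add: algebra_simps)
  moreover have "n - k = k + Suc (Suc r)" using assms by simp
  ultimately show ?thesis unfolding symm_poch_def by (simp add: algebra_simps)
qed

lemma symm_poch_Suc_factor: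
  assumes "n = 2 * k + r + 2"
  shows "symm_poch s t n (Suc k) = pochhammer s k * pochhammer t k *
     ((s + k) * (t + k) * (pochhammer (s + k + 1) r + pochhammer (t + k + 1) r))"
proof -
  have "pochhammer z (k + Suc r) = pochhammer z k * ((z + k) * pochhammer (z + k + 1) r)" for z :: real
    by (simp only: pochhammer_product' pochhammer_rec[of "z + k"])
  moreover have "n - Suc k = k + Suc r" using assms by simp
  ultimately show ?thesis unfolding symm_poch_def by (simp add: pochhammer_Suc algebra_simps)
qed

lemma symm_poch_Suc_le_ordered:
  fixes s1 t1 s2 t2 :: real
  assumes sum: "s1 + t1 = s2 + t2" and ord: "s1 \<le> s2" "t1 \<le> s1" "0 \<le> t2" "0 < s2"
    and n: "n = 2 * k + r + 2"
    and le: "symm_poch s2 t2 n k \<le> symm_poch s1 t1 n k"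
  shows "symm_poch s2 t2 n (Suc k) \<le> symm_poch s1 t1 n (Suc k)"
proof -
  define \<sigma>1 \<tau>1 \<sigma>2 \<tau>2 where "\<sigma>1 = s1 + k" and "\<tau>1 = t1 + k" and "\<sigma>2 = s2 + k" and "\<tau>2 = t2 + k"
  define mu :: real where "mu = r + 1"
  define X1 Y1 X2 Y2 where "X1 = pochhammer (\<sigma>1 + 1) r" and "Y1 = pochhammer (\<tau>1 + 1) r"
    and "X2 = pochhammer (\<sigma>2 + 1) r" and "Y2 = pochhammer (\<tau>2 + 1) r"
  define \<pi>1 \<pi>2 where "\<pi>1 = pochhammer s1 k * pochhammer t1 k" and "\<pi>2 = pochhammer s2 k * pochhammer t2 k"
  define B1 B2 where "B1 = \<sigma>1 * (\<sigma>1 + mu) * X1 + \<tau>1 * (\<tau>1 + mu) * Y1"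
    and "B2 = \<sigma>2 * (\<sigma>2 + mu) * X2 + \<tau>2 * (\<tau>2 + mu) * Y2"
  define C1 C2 where "C1 = \<sigma>1 * \<tau>1 * (X1 + Y1)" and "C2 = \<sigma>2 * \<tau>2 * (X2 + Y2)"
  have t2le: "t2 \<le> t1" using sum ord by simp
  have H1: "symm_poch s1 t1 n k = \<pi>1 * B1" "symm_poch s1 t1 n (Suc k) = \<pi>1 * C1"
    unfolding \<pi>1_def B1_def C1_def \<sigma>1_def \<tau>1_def X1_def Y1_def mu_def
    by (rule symm_poch_factor[OF n], rule symm_poch_Suc_factor[OF n])
  have H2: "symm_poch s2 t2 n k = \<pi>2 * B2" "symm_poch s2 t2 n (Suc k) = \<pi>2 * C2"
    unfolding \<pi>2_def B2_def C2_def \<sigma>2_def \<tau>2_def X2_def Y2_def mu_def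
    by (rule symm_poch_factor[OF n], rule symm_poch_Suc_factor[OF n])
  have nn: "0 \<le> \<tau>2" "\<tau>2 \<le> \<tau>1" "\<tau>1 \<le> \<sigma>1" "\<sigma>1 \<le> \<sigma>2" "0 < \<sigma>2"
    using ord t2le by (simp_all add: \<sigma>1_def \<tau>1_def \<sigma>2_def \<tau>2_def)
  have XY: "Y2 \<ge> 0" "X2 \<ge> Y2" "Y1 \<ge> 0" "X1 \<ge> Y1" "X2 * Y1 \<ge> X1 * Y2"
    unfolding X1_def Y1_def X2_def Y2_def using nn sum
    by (auto intro!: pochhammer_nonneg' pochhammer_mono pochhammer_cross_le
        simp: \<sigma>1_def \<tau>1_def \<sigma>2_def \<tau>2_def)
  have X2: "X2 > 0" unfolding X2_def using nn by (simp add: pochhammer_pos)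
  have "B1 * C2 \<le> C1 * B2"
    unfolding B1_def C2_def C1_def B2_def using sum nn XY
    by (intro bracket_ineq) (simp_all add: mu_def \<sigma>1_def \<tau>1_def \<sigma>2_def \<tau>2_def)
  moreover have "\<pi>2 \<le> \<pi>1" "0 \<le> \<pi>2"
  proof -
    have t1: "t1 = s2 + t2 - s1" using sum by simp
    have "s1 * t1 - s2 * t2 = (s2 - s1) * (s1 - t2)" by (simp only: t1) (simp add: algebra_simps)
    moreover have "(s2 - s1) * (s1 - t2) \<ge> 0" using ord t2le by simp
    ultimately have "s2 * t2 \<le> s1 * t1" by linarith
    then show "\<pi>2 \<le> \<pi>1"
      unfolding \<pi>1_def \<pi>2_def using sum ord t2le by (intro pochhammer_pair_le) auto
    show "0 \<le> \<pi>2" using ord by (simp add: \<pi>2_def pochhammer_nonneg')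
  qed
  moreover have "C2 \<ge> 0" "B2 > 0" using nn XY X2 by (simp_all add: C2_def B2_def mu_def add_pos_nonneg)
  moreover have "\<pi>2 * B2 \<le> \<pi>1 * B1" using le H1 H2 by simp
  ultimately have "B2 * (\<pi>2 * C2) \<le> B2 * (\<pi>1 * C1)"
    by (smt (verit, ccfv_SIG) mult.assoc mult.commute mult_left_mono mult_right_mono)
  then show ?thesis using H1 H2 \<open>B2 > 0\<close> by simp
qed

lemma symm_poch_Suc_le:
  fixes s1 t1 s2 t2 :: real
  assumes sum: "s1 + t1 = s2 + t2" and ord: "s1 \<le> s2" "t1 \<le> s2" "0 \<le> t2" "0 < s2"
    and n: "2 * k + 2 \<le> n"
    and le: "symm_poch s2 t2 n k \<le> symm_poch s1 t1 n k"
  shows "symm_poch s2 t2 n (Suc k) \<le> symm_poch s1 t1 n (Suc k)"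
proof -
  have n': "n = 2 * k + (n - 2 * k - 2) + 2" using n by simp
  show ?thesis
  proof (cases "t1 \<le> s1")
    case True
    then show ?thesis using symm_poch_Suc_le_ordered[OF sum ord(1) True ord(3,4) n' le] by simp
  next
    case False
    then show ?thesis
      using symm_poch_Suc_le_ordered[of t1 s1 s2 t2 n k, OF _ ord(2) _ ord(3,4) n'] sum le
        symm_poch_commute[of s1 t1] by simp
  qed
qed

lemma symm_poch_le_towards_middle:
  fixes s1 t1 s2 t2 :: real
  assumes sum: "s1 + t1 = s2 + t2" and ord: "s1 \<le> s2" "t1 \<le> s2" "0 \<le> t2" "0 < s2"
    and kn: "k \<le> n" "j \<le> n" and closer: "min k (n - k) \<le> min j (n - j)"
    and le: "symm_poch s2 t2 n k \<le> symm_poch s1 t1 n k"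
  shows "symm_poch s2 t2 n j \<le> symm_poch s1 t1 n j"
proof -
  have "2 * i \<le> n \<Longrightarrow> symm_poch s2 t2 n i \<le> symm_poch s1 t1 n i" if "min k (n - k) \<le> i" for i
    using that
  proof (induction i rule: dec_induct)
    case base
    then show ?case using le symm_poch_min_reflect[OF kn(1)] by simp
  next
    case (step i)
    then show ?case using symm_poch_Suc_le[OF sum ord] by simp
  qed
  from this[OF closer] show ?thesis using symm_poch_min_reflect[OF kn(2)] by simp
qed

lemma symm_poch_middle:
  "symm_poch s t n (n div 2) = pochhammer s (n div 2) * pochhammer t (n div 2) *
      (if even n then 2 else s + t + 2 * real (n div 2))"
proof (cases "even n")
  case True
  then have "n - n div 2 = n div 2" by presburger
  then show ?thesis using True by (simp add: symm_poch_def)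
next
  case False
  then have "n - n div 2 = Suc (n div 2)" by presburger
  then show ?thesis using False by (simp add: symm_poch_def pochhammer_Suc algebra_simps)
qed

lemma sum_atMost_reflect: "(\<Sum>k\<le>(n::nat). g (n - k)) = (\<Sum>k\<le>n. g k)"
  by (rule sum.reindex_bij_witness[where i="\<lambda>k. n - k" and j="\<lambda>k. n - k"]) auto

lemma symm_poch_binomial_sum:
  "(\<Sum>k\<le>n. of_nat (n choose k) * symm_poch s t n k) = 2 * pochhammer (s + t) n"
proof -
  have "(\<Sum>k\<le>n. of_nat (n choose k) * (pochhammer s (n - k) * pochhammer t k)) =
        (\<Sum>k\<le>n. of_nat (n choose (n - k)) * (pochhammer s (n - (n - k)) * pochhammer t (n - k)))"
    by (rule sum_atMost_reflect[symmetric])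
  also have "\<dots> = (\<Sum>k\<le>n. of_nat (n choose k) * pochhammer s k * pochhammer t (n - k))"
    by (intro sum.cong refl) (simp add: binomial_symmetric[symmetric] mult.assoc)
  finally show ?thesis
    by (simp add: symm_poch_def sum.distrib algebra_simps pochhammer_binomial_sum)
qed

definition coef_ratio :: "real \<Rightarrow> real \<Rightarrow> nat \<Rightarrow> nat \<Rightarrow> real" where
  "coef_ratio b c n k = pochhammer b k * pochhammer b (n - k) / (pochhammer c k * pochhammer c (n - k))"

lemma coef_ratio_reflect: "k \<le> n \<Longrightarrow> coef_ratio b c n (n - k) = coef_ratio b c n k"
  by (simp add: coef_ratio_def mult.commute)

lemma coef_ratio_min_reflect: "k \<le> n \<Longrightarrow> coef_ratio b c n (min k (n - k)) = coef_ratio b c n k"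
  by (cases "k \<le> n - k") (simp_all add: min_def coef_ratio_reflect)

lemma coef_ratio_Suc_less:
  assumes bc: "c < b" "0 < c" and n: "2 * k + 2 \<le> n"
  shows "coef_ratio b c n k < coef_ratio b c n (Suc k)"
proof -
  define j where "j = n - Suc k"
  have nk: "n - k = Suc j" and kj: "real k < real j" using n by (simp_all add: j_def)
  define Q where "Q = pochhammer b k * pochhammer b j / (pochhammer c k * pochhammer c j)"
  have Q: "Q > 0" using bc by (simp add: Q_def pochhammer_pos)
  have "(b + j) * (c + k) < (b + k) * (c + j)"
  proof -
    have "(b + k) * (c + j) - (b + j) * (c + k) = (b - c) * (real j - real k)" by (simp add: algebra_simps)
    moreover have "(b - c) * (real j - real k) > 0" using bc kj by simp
    ultimately show ?thesis by simp
  qed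
  then have "(b + j) / (c + j) < (b + k) / (c + k)" using bc by (simp add: divide_simps)
  then have "Q * ((b + j) / (c + j)) < Q * ((b + k) / (c + k))" using Q by (rule mult_strict_left_mono)
  moreover have "coef_ratio b c n k = Q * ((b + j) / (c + j))"
    unfolding coef_ratio_def nk Q_def by (simp add: pochhammer_Suc field_simps)
  moreover have "coef_ratio b c n (Suc k) = Q * ((b + k) / (c + k))"
    unfolding coef_ratio_def Q_def j_def by (simp add: pochhammer_Suc field_simps)
  ultimately show ?thesis by simp
qed

lemma coef_ratio_less_towards_middle:
  assumes bc: "c < b" "0 < c" and kn: "k \<le> n" "j \<le> n" and closer: "min j (n - j) < min k (n - k)"
  shows "coef_ratio b c n j < coef_ratio b c n k"
proof -
  have "2 * i \<le> n \<Longrightarrow> coef_ratio b c n (min j (n - j)) < coef_ratio b c n i"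
    if "Suc (min j (n - j)) \<le> i" for i
    using that
  proof (induction i rule: dec_induct)
    case base
    then show ?case using coef_ratio_Suc_less[OF bc] by simp
  next
    case (step i)
    then show ?case using coef_ratio_Suc_less[OF bc, of i n] by simp
  qed
  from this[of "min k (n - k)"] closer show ?thesis
    using coef_ratio_min_reflect[OF kn(1)] coef_ratio_min_reflect[OF kn(2)] by simp
qed

text \<open>With \<open>\<theta> = max {\<rho> j | E j < 0}\<close>, every term of \<open>\<Sum> w (\<rho> - \<theta>) E\<close> is nonnegative, while
  \<open>\<Sum> w \<theta> E = 0\<close>.\<close>

lemma weighted_sum_pos_of_sign_spread:
  fixes w \<rho> E :: "nat \<Rightarrow> real" and l :: "nat \<Rightarrow> nat"
  assumes w: "\<And>k. k \<le> n \<Longrightarrow> w k > 0"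
    and zero: "(\<Sum>k\<le>n. w k * E k) = 0"
    and spread: "\<And>k j. k \<le> n \<Longrightarrow> j \<le> n \<Longrightarrow> E k \<ge> 0 \<Longrightarrow> l k \<le> l j \<Longrightarrow> E j \<ge> 0"
    and mono: "\<And>k j. k \<le> n \<Longrightarrow> j \<le> n \<Longrightarrow> l j < l k \<Longrightarrow> \<rho> j < \<rho> k"
    and i: "i \<le> n" "E i > 0"
  shows "(\<Sum>k\<le>n. w k * \<rho> k * E k) > 0"
proof -
  define N where "N = {j \<in> {..n}. E j < 0}"
  have "N \<noteq> {}"
  proof
    assume "N = {}"
    then have "\<And>k. k \<le> n \<Longrightarrow> E k \<ge> 0" by (force simp: N_def)
    then have "w i * E i \<le> (\<Sum>k\<le>n. w k * E k)"
      using i w by (intro member_le_sum) (auto intro: mult_nonneg_nonneg less_imp_le)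
    moreover have "w i * E i > 0" using w[OF i(1)] i by simp
    ultimately show False using zero by simp
  qed
  define \<theta> where "\<theta> = Max (\<rho> ` N)"
  have "finite N" by (simp add: N_def)
  then have \<theta>_ge: "\<rho> j \<le> \<theta>" if "j \<in> N" for j unfolding \<theta>_def using that by simp
  have "\<theta> \<in> \<rho> ` N" unfolding \<theta>_def using \<open>finite N\<close> \<open>N \<noteq> {}\<close> by simp
  then obtain j0 where j0: "j0 \<le> n" "E j0 < 0" "\<theta> = \<rho> j0" by (auto simp: N_def)
  have pos: "\<rho> k > \<theta>" if "k \<le> n" "E k > 0" for k
  proof -
    have "\<not> l k \<le> l j0" using spread[OF that(1) j0(1)] that j0 by force
    then show ?thesis using mono[OF that(1) j0(1)] j0 by simp
  qed
  have nonneg: "w k * (\<rho> k - \<theta>) * E k \<ge> 0" if "k \<le> n" for k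
  proof (cases "E k" "0 :: real" rule: linorder_cases)
    case less
    then have "\<rho> k - \<theta> \<le> 0" using \<theta>_ge that by (simp add: N_def)
    then show ?thesis using less w[OF that] by (simp add: mult_nonpos_nonpos mult_nonneg_nonpos)
  next
    case greater
    then show ?thesis using pos[OF that greater] w[OF that] by simp
  qed simp
  have "(\<Sum>k\<le>n. w k * \<rho> k * E k) = (\<Sum>k\<le>n. w k * (\<rho> k - \<theta>) * E k) + \<theta> * (\<Sum>k\<le>n. w k * E k)"
    by (simp add: sum_distrib_left sum.distrib[symmetric] algebra_simps)
  also have "\<dots> = (\<Sum>k\<le>n. w k * (\<rho> k - \<theta>) * E k)" using zero by simp
  also have "\<dots> \<ge> w i * (\<rho> i - \<theta>) * E i"
    using nonneg i by (intro member_le_sum) auto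
  finally show ?thesis using pos[OF i] w[OF i(1)] i by (smt (verit) mult_pos_pos)
qed

definition hg_cross_coef :: "real \<Rightarrow> real \<Rightarrow> real \<Rightarrow> real \<Rightarrow> real \<Rightarrow> nat \<Rightarrow> real" where
  "hg_cross_coef a a' b c \<delta> n = (\<Sum>k\<le>n. hg_coef (a + \<delta>) b c k * hg_coef a' b c (n - k)
                                     - hg_coef (a' + \<delta>) b c k * hg_coef a b c (n - k))"

lemma sums_hg_cross_coef:
  assumes "c > 0" "\<bar>x\<bar> < 1"
  shows "(\<lambda>n. hg_cross_coef a a' b c \<delta> n * x ^ n)
           sums (hg_series (a + \<delta>) b c x * hg_series a' b c x - hg_series (a' + \<delta>) b c x * hg_series a b c x)"
  using sums_diff[OF hg_series_mult[OF assms, of "a + \<delta>" b a' b] hg_series_mult[OF assms, of "a' + \<delta>" b a b]]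
  by (simp add: hg_cross_coef_def sum_subtractf left_diff_distrib)

lemma hg_cross_coef_0: "hg_cross_coef a a' b c \<delta> 0 = 0"
  by (simp add: hg_cross_coef_def)

lemma hg_cross_coef_1: "c > 0 \<Longrightarrow> hg_cross_coef a a' b c \<delta> 1 = 0"
  by (simp add: hg_cross_coef_def hg_coef_def field_simps)

lemma hg_cross_coef_eq_symm_poch:
  assumes "c > 0"
  shows "2 * fact n * hg_cross_coef a a' b c \<delta> n = (\<Sum>k\<le>n. of_nat (n choose k) * coef_ratio b c n k *
           (symm_poch (a + \<delta>) a' n k - symm_poch (a' + \<delta>) a n k))"
proof -
  define D where "D k = pochhammer (a + \<delta>) k * pochhammer a' (n - k) - pochhammer (a' + \<delta>) k * pochhammer a (n - k)" for k
  define w where "w k = of_nat (n choose k) * coef_ratio b c n k" for k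
  have "fact n * (hg_coef (a + \<delta>) b c k * hg_coef a' b c (n - k) - hg_coef (a' + \<delta>) b c k * hg_coef a b c (n - k))
      = w k * D k" if "k \<le> n" for k
  proof -
    have "pochhammer c k > 0" "pochhammer c (n - k) > 0" using assms by (simp_all add: pochhammer_pos)
    moreover have "real (n choose k) = fact n / (fact k * fact (n - k))" using that by (simp add: binomial_fact)
    ultimately show ?thesis
      unfolding w_def \<open>real (n choose k) = _\<close> by (simp add: hg_coef_def coef_ratio_def D_def field_simps)
  qed
  then have "fact n * hg_cross_coef a a' b c \<delta> n = (\<Sum>k\<le>n. w k * D k)"
    by (simp add: hg_cross_coef_def sum_distrib_left)
  moreover have "(\<Sum>k\<le>n. w k * D k) = (\<Sum>k\<le>n. w k * D (n - k))"
    by (subst sum_atMost_reflect[symmetric])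
      (intro sum.cong refl, simp add: w_def coef_ratio_reflect binomial_symmetric[symmetric])
  moreover have "symm_poch (a + \<delta>) a' n k - symm_poch (a' + \<delta>) a n k = D k + D (n - k)" if "k \<le> n" for k
    using that by (simp add: D_def symm_poch_def algebra_simps)
  ultimately show ?thesis by (simp add: w_def sum.distrib algebra_simps)
qed

lemma hg_cross_coef_pos:
  assumes a: "0 \<le> a" "a < a'" and \<delta>: "0 < \<delta>" and bc: "c < b" "0 < c" and n: "2 \<le> n"
  shows "hg_cross_coef a a' b c \<delta> n > 0"
proof -
  define s1 t1 s2 t2 where "s1 = a + \<delta>" and "t1 = a'" and "s2 = a' + \<delta>" and "t2 = a"
  define E where "E k = symm_poch s1 t1 n k - symm_poch s2 t2 n k" for k
  have sum: "s1 + t1 = s2 + t2" and ord: "s1 \<le> s2" "t1 \<le> s2" "0 \<le> t2" "0 < s2"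
    using a \<delta> by (simp_all add: s1_def t1_def s2_def t2_def)
  have "(\<Sum>k\<le>n. of_nat (n choose k) * E k) = 0"
    by (simp add: E_def sum_subtractf algebra_simps symm_poch_binomial_sum sum)
  moreover have "E (n div 2) > 0"
  proof -
    have "s1 * t1 - s2 * t2 = \<delta> * (a' - a)" by (simp add: s1_def t1_def s2_def t2_def algebra_simps)
    then have "s2 * t2 < s1 * t1" using a \<delta> by (smt (verit) mult_pos_pos)
    then have "pochhammer s2 (n div 2) * pochhammer t2 (n div 2) < pochhammer s1 (n div 2) * pochhammer t1 (n div 2)"
      using sum ord n by (intro pochhammer_pair_less) auto
    moreover have "0 < (if even n then 2 else s1 + t1 + 2 * real (n div 2))" using ord sum by simp
    ultimately show ?thesis
      unfolding E_def symm_poch_middle sum by (simp add: left_diff_distrib[symmetric])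
  qed
  ultimately have "(\<Sum>k\<le>n. of_nat (n choose k) * coef_ratio b c n k * E k) > 0"
    using symm_poch_le_towards_middle[OF sum ord] coef_ratio_less_towards_middle[OF bc]
    by (intro weighted_sum_pos_of_sign_spread[where l="\<lambda>k. min k (n - k)" and i="n div 2"])
      (auto simp: E_def)
  also have "\<dots> = 2 * fact n * hg_cross_coef a a' b c \<delta> n"
    using hg_cross_coef_eq_symm_poch[OF bc(2), of n a a' b \<delta>] by (simp add: E_def s1_def t1_def s2_def t2_def)
  finally show ?thesis by (simp add: zero_less_mult_iff)
qed

section \<open>Bounds for the ratio of cross products\<close>

lemma has_sum_diff:
  fixes f g :: "'a \<Rightarrow> 'b::{topological_ab_group_add}"
  assumes "(f has_sum a) A" "(g has_sum b) A"
  shows "((\<lambda>x. f x - g x) has_sum (a - b)) A"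
  using has_sum_add[OF assms(1), of "\<lambda>x. - g x" "- b"] has_sum_uminus[where f=g and a="- b"] assms(2) by simp

lemma has_sum_mult_nonneg:
  fixes f g :: "nat \<Rightarrow> real"
  assumes f0: "\<And>k. f k \<ge> 0" and g0: "\<And>j. g j \<ge> 0" and fs: "f sums A" and gs: "g sums B"
  shows "((\<lambda>(k,j). f k * g j) has_sum (A * B)) UNIV"
proof -
  have rows: "(\<lambda>j. f k * g j) sums (f k * B)" for k by (rule sums_mult[OF gs])
  have "(\<lambda>k. f k * B) sums (A * B)" by (rule sums_mult2[OF fs])
  moreover have S: "(\<lambda>(k,j). f k * g j) summable_on UNIV"
    by (rule summable_on_pairs_nonneg[OF _ rows]) (use f0 g0 calculation in \<open>auto simp: sums_iff\<close>)
  moreover have "(\<lambda>k. f k * B) sums infsum (\<lambda>(k,j). f k * g j) UNIV"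
    using summable_on_pairs_sums(1)[OF S] rows by (simp add: sums_iff)
  ultimately show ?thesis using has_sum_infsum[OF S] sums_unique2 by metis
qed

lemma has_sum_pos_of_symmetrization:
  fixes Q :: "nat \<times> nat \<Rightarrow> real"
  assumes Q: "(Q has_sum D) UNIV"
    and sym: "\<And>k j. Q (k, j) + Q (j, k) \<ge> 0" and diag: "Q (0, 0) > 0"
  shows "D > 0"
proof -
  define sw :: "nat \<times> nat \<Rightarrow> nat \<times> nat" where "sw p = (snd p, fst p)" for p
  have "bij_betw sw UNIV UNIV" by (rule bij_betwI[where g=sw]) (auto simp: sw_def)
  then have "((\<lambda>p. Q (sw p)) has_sum D) UNIV" using has_sum_reindex_bij_betw Q by blast
  then have V: "((\<lambda>p. Q p + Q (sw p)) has_sum (D + D)) UNIV" by (rule has_sum_add[OF Q])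
  have "(\<Sum>p\<in>{(0, 0)}. Q p + Q (sw p)) \<le> D + D"
    by (rule finite_sum_le_has_sum[OF V]) (auto simp: sw_def sym)
  then show ?thesis using diag by (simp add: sw_def)
qed

definition Gamma_ratio :: "real \<Rightarrow> real \<Rightarrow> real" where
  "Gamma_ratio d u = Gamma (u + d) / Gamma u"

lemma Gamma_ratio_pos: "0 < u \<Longrightarrow> 0 < d \<Longrightarrow> Gamma_ratio d u > 0"
  by (simp add: Gamma_ratio_def)

lemma Gamma_ratio_strict_mono:
  assumes d: "0 < d" and u: "0 < u" "u < v"
  shows "Gamma_ratio d u < Gamma_ratio d v"
proof -
  define \<phi> where "\<phi> x = ln_Gamma (x + d) - ln_Gamma x" for x :: real
  have "\<phi> u < \<phi> v"
  proof (rule DERIV_pos_imp_increasing[OF u(2)])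
    fix x assume "u \<le> x" "x \<le> v"
    then have x: "x > 0" using u by simp
    have "DERIV \<phi> x :> (Digamma (x + d) - Digamma x)"
      unfolding \<phi>_def using x d by (auto intro!: derivative_eq_intros has_field_derivative_ln_Gamma_real)
    moreover have "Digamma (x + d) - Digamma x > 0" using Digamma_real_strict_mono[of x "x + d"] x d by simp
    ultimately show "\<exists>y. DERIV \<phi> x :> y \<and> y > 0" by blast
  qed
  moreover have "Gamma_ratio d x = exp (\<phi> x)" if "x > 0" for x
    using that d by (simp add: Gamma_ratio_def \<phi>_def Gamma_real_pos_exp exp_diff)
  ultimately show ?thesis using u by simp
qed

lemma pochhammer_shift_Gamma_ratio:
  assumes a: "a > 0" and d: "d > 0"
  shows "pochhammer (a + d) k = pochhammer a k * Gamma_ratio d (a + k) / Gamma_ratio d a"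
proof -
  have "a \<notin> \<int>\<^sub>\<le>\<^sub>0" "a + d \<notin> \<int>\<^sub>\<le>\<^sub>0" using a d by (auto dest: nonpos_Ints_nonpos)
  moreover have "Gamma a > 0" "Gamma (a + d) > 0" "Gamma (a + k) > 0" "Gamma (a + k + d) > 0"
    using a d by simp_all
  ultimately show ?thesis
    by (simp add: pochhammer_Gamma Gamma_ratio_def field_simps add_ac)
qed

lemma pochhammer_mult_le_swap:
  fixes a a' :: real
  assumes "0 < a" "a \<le> a'" "k \<le> j"
  shows "pochhammer a' k * pochhammer a j \<le> pochhammer a' j * pochhammer a k"
proof -
  have "pochhammer a' k * pochhammer a j = (pochhammer a' k * pochhammer a k) * pochhammer (a + k) (j - k)"
    using pochhammer_product[OF assms(3), of a] by (simp add: mult_ac)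
  also have "\<dots> \<le> (pochhammer a' k * pochhammer a k) * pochhammer (a' + k) (j - k)"
    using assms by (intro mult_left_mono pochhammer_mono) (auto simp: pochhammer_nonneg')
  also have "\<dots> = pochhammer a' j * pochhammer a k"
    using pochhammer_product[OF assms(3), of a'] by (simp add: mult_ac)
  finally show ?thesis .
qed

lemma symmetrized_cross_term_nonneg:
  fixes W W' :: "nat \<Rightarrow> real" and m :: "real \<Rightarrow> real" and a a' :: real
  assumes m: "\<And>u v. 0 < u \<Longrightarrow> u < v \<Longrightarrow> m u < m v"
    and a: "0 < a" "a < a'" and W: "\<And>i. W i > 0" "\<And>i. W' i > 0"
    and swap: "\<And>k j. k \<le> j \<Longrightarrow> W k * W' j \<le> W j * W' k"
  shows "0 \<le> (W k * m (a' + k) * W' j - W' k * m (a + k) * W j)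
            + (W j * m (a' + j) * W' k - W' j * m (a + j) * W k)"
proof -
  have *: "0 \<le> (W k * m (a' + k) * W' j - W' k * m (a + k) * W j)
            + (W j * m (a' + j) * W' k - W' j * m (a + j) * W k)" if "k \<le> j" for k j
  proof -
    define U1 U2 where "U1 = W k * W' j" and "U2 = W j * W' k"
    have "U1 \<ge> 0" "U1 \<le> U2" using W swap[OF that] by (simp_all add: U1_def U2_def less_imp_le)
    moreover have "m (a + k) < m (a' + k)" "m (a + j) < m (a' + j)" "m (a + k) < m (a' + j)"
      using m a that by simp_all
    moreover have "(W k * m (a' + k) * W' j - W' k * m (a + k) * W j) + (W j * m (a' + j) * W' k - W' j * m (a + j) * W k)
      = U1 * ((m (a' + k) - m (a + k)) + (m (a' + j) - m (a + j))) + (U2 - U1) * (m (a' + j) - m (a + k))"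
      by (simp add: U1_def U2_def algebra_simps)
    ultimately show ?thesis by (simp add: add_nonneg_nonneg)
  qed
  show ?thesis using *[of k j] *[of j k] by (cases "k \<le> j") simp_all
qed

lemma hg_terms_mult_le_swap:
  assumes "0 < a" "a \<le> a'" "k \<le> j" "0 < b" "0 < c" "0 \<le> y"
  shows "hg_coef a' b c k * y ^ k * (hg_coef a b c j * y ^ j)
           \<le> hg_coef a' b c j * y ^ j * (hg_coef a b c k * y ^ k)"
proof -
  define G where "G i = pochhammer b i / (pochhammer c i * fact i) * y ^ i" for i
  have "G i \<ge> 0" for i
    using assms unfolding G_def
    by (intro mult_nonneg_nonneg divide_nonneg_pos mult_pos_pos less_imp_le[OF pochhammer_pos])
      (auto simp: pochhammer_pos)
  moreover have "hg_coef \<alpha> b c i * y ^ i = pochhammer \<alpha> i * G i" for \<alpha> i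
    by (simp add: hg_coef_def G_def)
  ultimately show ?thesis
    using mult_right_mono[OF pochhammer_mult_le_swap[OF assms(1-3)], of "G k * G j"]
    by (simp add: mult_ac)
qed

text \<open>With \<open>w\<^sub>\<alpha>(k) = hg_coef \<alpha> b c k y\<^sup>k\<close> one has
  \<open>w\<^sub>\<alpha>\<^sub>+\<^sub>\<delta>(k) = w\<^sub>\<alpha>(k) \<Gamma>(\<alpha>+k+\<delta>)\<Gamma>(\<alpha>) / (\<Gamma>(\<alpha>+k)\<Gamma>(\<alpha>+\<delta>))\<close>, so the claim is the positivity of a double
  series whose symmetrisation is termwise nonnegative because \<open>u \<mapsto> \<Gamma>(u+\<delta>)/\<Gamma>(u)\<close> increases.\<close>

lemma hg_series_cross_lower:
  fixes a a' b c y d :: real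
  assumes bc: "c < b" "0 < c" and y: "0 < y" "y < 1" and a: "0 < a" "a < a'" and d: "0 < d"
  shows "Gamma_ratio d a / Gamma_ratio d a' * (hg_series (a + d) b c y * hg_series a' b c y)
           < hg_series (a' + d) b c y * hg_series a b c y"
proof -
  define w where "w \<alpha> k = hg_coef \<alpha> b c k * y ^ k" for \<alpha> k
  define m where "m = Gamma_ratio d"
  have m: "m u > 0" if "u > 0" for u using that d by (simp add: m_def Gamma_ratio_pos)
  have w: "w \<alpha> k > 0" if "\<alpha> > 0" for \<alpha> k using that bc y by (simp add: w_def hg_coef_pos)
  have ws: "w \<alpha> sums hg_series \<alpha> b c y" for \<alpha> unfolding w_def using y bc by (intro sums_hg_series) auto
  have wms: "(\<lambda>k. w \<alpha> k * m (\<alpha> + k)) sums (m \<alpha> * hg_series (\<alpha> + d) b c y)" if "\<alpha> > 0" for \<alpha>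
  proof -
    have "w \<alpha> k * m (\<alpha> + k) = m \<alpha> * (hg_coef (\<alpha> + d) b c k * y ^ k)" for k
      using m[OF that] unfolding w_def hg_coef_def pochhammer_shift_Gamma_ratio[OF that d] m_def
      by (simp add: field_simps)
    then show ?thesis using sums_mult[OF ws[of "\<alpha> + d", unfolded w_def]] by simp
  qed
  have swap: "w a' k * w a j \<le> w a' j * w a k" if "k \<le> j" for k j
    unfolding w_def using a bc y that by (intro hg_terms_mult_le_swap) auto
  define Q where "Q p = w a' (fst p) * m (a' + fst p) * w a (snd p) - w a (fst p) * m (a + fst p) * w a' (snd p)" for p
  have "(Q has_sum (m a' * hg_series (a' + d) b c y * hg_series a b c y
                     - m a * hg_series (a + d) b c y * hg_series a' b c y)) UNIV"
    unfolding Q_def using a w m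
    by (intro has_sum_diff[unfolded case_prod_unfold] has_sum_mult_nonneg[unfolded case_prod_unfold] wms ws)
      (auto intro: less_imp_le)
  moreover have "Q (k, j) + Q (j, k) \<ge> 0" for k j
  proof -
    have "0 \<le> (w a' k * m (a' + k) * w a j - w a k * m (a + k) * w a' j)
            + (w a' j * m (a' + j) * w a k - w a j * m (a + j) * w a' k)"
      using a w swap Gamma_ratio_strict_mono[OF d]
      by (intro symmetrized_cross_term_nonneg) (auto simp: m_def)
    then show ?thesis by (simp add: Q_def)
  qed
  moreover have "Q (0, 0) > 0" using Gamma_ratio_strict_mono[OF d a] by (simp add: Q_def w_def m_def)
  ultimately have "0 < m a' * hg_series (a' + d) b c y * hg_series a b c y
                     - m a * hg_series (a + d) b c y * hg_series a' b c y"
    by (rule has_sum_pos_of_symmetrization)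
  then show ?thesis using m a by (simp add: m_def divide_less_eq mult_ac)
qed

lemma hg_series_cross_less:
  assumes bc: "c < b" "0 < c" and y: "0 < y" "y < 1" and a: "0 \<le> a" "a < a'" and \<delta>: "0 < \<delta>"
  shows "hg_series (a' + \<delta>) b c y * hg_series a b c y < hg_series (a + \<delta>) b c y * hg_series a' b c y"
proof -
  let ?d = "hg_cross_coef a a' b c \<delta>"
  have s: "(\<lambda>n. ?d n * y ^ n) sums (hg_series (a + \<delta>) b c y * hg_series a' b c y - hg_series (a' + \<delta>) b c y * hg_series a b c y)"
    using bc y by (intro sums_hg_cross_coef) auto
  have "?d n * y ^ n \<ge> 0" for n
    using hg_cross_coef_pos[OF a \<delta> bc, of n] hg_cross_coef_0 hg_cross_coef_1[OF bc(2)] y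
    by (cases "n \<ge> 2") (auto simp: not_le less_2_cases_iff)
  then have "(\<Sum>n<3. ?d n * y ^ n) \<le> (\<Sum>n. ?d n * y ^ n)"
    by (intro sum_le_suminf sums_summable[OF s]) auto
  moreover have "(\<Sum>n<3. ?d n * y ^ n) = ?d 2 * y ^ 2"
    using hg_cross_coef_0 hg_cross_coef_1[OF bc(2)] by (simp add: numeral_3_eq_3 numeral_2_eq_2 lessThan_Suc power2_eq_square)
  moreover have "?d 2 * y ^ 2 > 0" using hg_cross_coef_pos[OF a \<delta> bc, of 2] y by simp
  ultimately show ?thesis using s by (simp add: sums_iff)
qed

lemma hg_series_log_concave:
  assumes "c < b" "0 < c" "0 < y" "y < 1" "0 \<le> a" "0 < \<delta>"
  shows "hg_series a b c y * hg_series (a + 2 * \<delta>) b c y \<le> hg_series (a + \<delta>) b c y ^ 2"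
  using hg_series_cross_less[OF assms(1-5), of "a + \<delta>" \<delta>] assms
  by (simp add: power2_eq_square mult.commute add.assoc)

lemma hg_series_log_concave_reflected:
  assumes "c < b" "0 < c" "0 < y" "y < 1" "a + 2 * \<delta> \<le> c" "0 < \<delta>"
  shows "hg_series (c - a) b c y * hg_series (c - (a + 2 * \<delta>)) b c y \<le> hg_series (c - (a + \<delta>)) b c y ^ 2"
  using hg_series_log_concave[OF assms(1-4), of "c - a - 2 * \<delta>" \<delta>] assms
  by (simp add: algebra_simps)

lemma hg_series_ratio_bounds:
  assumes bc: "c < b" "0 < c" and y: "0 < y" "y < 1" and a: "0 < a" "a < a'" and \<delta>: "0 < \<delta>"
  shows "Gamma (a + \<delta>) * Gamma a' / (Gamma a * Gamma (a' + \<delta>)) <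
           (hg_series (a' + \<delta>) b c y * hg_series a b c y) / (hg_series (a + \<delta>) b c y * hg_series a' b c y)
         \<and> (hg_series (a' + \<delta>) b c y * hg_series a b c y) / (hg_series (a + \<delta>) b c y * hg_series a' b c y) < 1"
proof -
  have "hg_series (a + \<delta>) b c y * hg_series a' b c y > 0"
    using hg_series_pos[of c b "a + \<delta>" y] hg_series_pos[of c b a' y] bc a \<delta> y by simp
  moreover have "Gamma (a + \<delta>) * Gamma a' / (Gamma a * Gamma (a' + \<delta>)) = Gamma_ratio \<delta> a / Gamma_ratio \<delta> a'"
    using a \<delta> by (simp add: Gamma_ratio_def field_simps)
  ultimately show ?thesis
    using hg_series_cross_less[OF bc y _ a(2) \<delta>] hg_series_cross_lower[OF bc y a \<delta>] a
    by (simp add: divide_less_eq less_divide_eq)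
qed

lemma hg_series_ratio_bounds_reflected:
  assumes bc: "c < b" "0 < c" and y: "0 < y" "y < 1" and a: "a' < c - \<delta>" "a < a'" and \<delta>: "0 < \<delta>"
  shows "Gamma (c - a - \<delta>) * Gamma (c - a') / (Gamma (c - a) * Gamma (c - a' - \<delta>)) <
           (hg_series (c - (a' + \<delta>)) b c y * hg_series (c - a) b c y) / (hg_series (c - (a + \<delta>)) b c y * hg_series (c - a') b c y)
         \<and> (hg_series (c - (a' + \<delta>)) b c y * hg_series (c - a) b c y) / (hg_series (c - (a + \<delta>)) b c y * hg_series (c - a') b c y) < 1"
  using hg_series_ratio_bounds[OF bc y, of "c - a' - \<delta>" "c - a - \<delta>" \<delta>] a \<delta>
  by (simp add: algebra_simps)

section \<open>Transfer to \<open>hyp2f1\<close>\<close>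

text \<open>The other parameter ranges reduce to \<open>b > c > 0\<close>, \<open>0 < y < 1\<close> by Euler's and Pfaff's
  transformations, which change \<open>a\<close> into \<open>c - a\<close> and/or \<open>b\<close> into \<open>c - b\<close> at the price of factors
  \<open>q powr e(a)\<close> with \<open>e\<close> affine in \<open>a\<close>; such factors are log-linear in \<open>a\<close>, so they drop out.\<close>

lemma log_concave_scaled:
  fixes k1 k2 k3 G1 G2 G3 :: real
  assumes "G1 * G3 \<le> G2 ^ 2" "k1 * k3 = k2 ^ 2"
  shows "(k1 * G1) * (k3 * G3) \<le> (k2 * G2) ^ 2"
proof -
  have "(k1 * G1) * (k3 * G3) = k2 ^ 2 * (G1 * G3)" using assms(2) by (simp add: mult_ac)
  also have "\<dots> \<le> k2 ^ 2 * G2 ^ 2" using assms(1) by (intro mult_left_mono) auto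
  finally show ?thesis by (simp add: power_mult_distrib)
qed

lemma cross_ratio_scaled:
  fixes k1 k2 k3 k4 g1 g2 g3 g4 :: real
  assumes "k1 * k2 = k3 * k4" "k3 * k4 \<noteq> 0"
  shows "(k1 * g1) * (k2 * g2) / ((k3 * g3) * (k4 * g4)) = g1 * g2 / (g3 * g4)"
  using assms by (simp add: mult_ac)

lemma powr_mult_powr_square: "e1 + e3 = e2 + e2 \<Longrightarrow> (q::real) powr e1 * q powr e3 = (q powr e2) ^ 2"
  by (simp add: power2_eq_square powr_add[symmetric])

lemma powr_mult_powr_eq: "e1 + e2 = e3 + e4 \<Longrightarrow> (q::real) powr e1 * q powr e2 = q powr e3 * q powr e4"
  by (simp add: powr_add[symmetric])

lemma hyp2f1_cross_difference_expansion:
  assumes "a < a'" "0 \<le> a" "c < b" "0 < c" "0 < \<delta>"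
  shows "\<exists>d :: nat \<Rightarrow> real.
           (\<forall>x::real. \<bar>x\<bar> < 1 \<longrightarrow> (\<lambda>n. d n * x ^ n) sums
              (hyp2f1 (a + \<delta>) b c x * hyp2f1 a' b c x - hyp2f1 (a' + \<delta>) b c x * hyp2f1 a b c x))
           \<and> d 0 = 0 \<and> d 1 = 0 \<and> (\<forall>n\<ge>2. d n > 0)"
proof (intro exI[of _ "hg_cross_coef a a' b c \<delta>"] conjI allI impI)
  fix x :: real assume "\<bar>x\<bar> < 1"
  then show "(\<lambda>n. hg_cross_coef a a' b c \<delta> n * x ^ n) sums
      (hyp2f1 (a + \<delta>) b c x * hyp2f1 a' b c x - hyp2f1 (a' + \<delta>) b c x * hyp2f1 a b c x)"
    using sums_hg_cross_coef[of c x] assms by (simp add: hyp2f1_eq_hg_series)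
qed (use assms hg_cross_coef_0 hg_cross_coef_1 hg_cross_coef_pos in auto)

lemma hyp2f1_log_concave:
  fixes a b c x \<delta> :: real
  assumes \<delta>: "\<delta> > 0" and cases:
      "(a \<ge> 0 \<and> 0 < x \<and> x < 1 \<and> b > c \<and> c > 0) \<or>
       (a \<ge> 0 \<and> x < 0 \<and> c > 0 \<and> 0 > b) \<or>
       (a + 2 * \<delta> \<le> c \<and> 0 < x \<and> x < 1 \<and> c > 0 \<and> 0 > b) \<or>
       (a + 2 * \<delta> \<le> c \<and> x < 0 \<and> b > c \<and> c > 0)"
  shows "hyp2f1 (a + \<delta>) b c x ^ 2 \<ge> hyp2f1 a b c x * hyp2f1 (a + 2 * \<delta>) b c x"
  using cases
proof (elim disjE conjE)
  assume "0 \<le> a" "0 < x" "x < 1" "c < b" "0 < c"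
  then show ?thesis
    using hg_series_log_concave[of c b x a \<delta>] \<delta> by (simp add: hyp2f1_eq_hg_series mult.commute)
next
  assume a: "0 \<le> a" and x: "x < 0" and bc: "0 < c" "b < 0"
  define y C where "y = x / (x - 1)" and "C = (1 - x) powr (-b)"
  have y: "0 < y" "y < 1" using Pfaff_variable_bounds[OF x] by (simp_all add: y_def)
  have "hyp2f1 \<alpha> b c x = (C * (1 - y) powr (\<alpha> - b)) * hg_series \<alpha> (c - b) c y" for \<alpha>
    using hyp2f1_neg_eq_Pfaff_Euler[OF bc(1) x, of \<alpha> b] by (simp add: y_def C_def)
  moreover have "(C * (1 - y) powr (a - b)) * (C * (1 - y) powr (a + 2 * \<delta> - b)) = (C * (1 - y) powr (a + \<delta> - b)) ^ 2"
    using powr_mult_powr_square[of "a - b" "a + 2 * \<delta> - b" "a + \<delta> - b" "1 - y"]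
    by (simp add: power_mult_distrib power2_eq_square mult_ac)
  moreover have "hg_series a (c - b) c y * hg_series (a + 2 * \<delta>) (c - b) c y \<le> hg_series (a + \<delta>) (c - b) c y ^ 2"
    using a bc y \<delta> by (intro hg_series_log_concave) auto
  ultimately show ?thesis using log_concave_scaled by simp
next
  assume a: "a + 2 * \<delta> \<le> c" and x: "0 < x" "x < 1" and bc: "0 < c" "b < 0"
  have "hyp2f1 \<alpha> b c x = (1 - x) powr (c - \<alpha> - b) * hg_series (c - \<alpha>) (c - b) c x" for \<alpha>
    using bc x by (intro hyp2f1_eq_Euler) auto
  moreover have "(1 - x) powr (c - a - b) * (1 - x) powr (c - (a + 2 * \<delta>) - b) = ((1 - x) powr (c - (a + \<delta>) - b)) ^ 2"
    by (rule powr_mult_powr_square) simp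
  moreover have "hg_series (c - a) (c - b) c x * hg_series (c - (a + 2 * \<delta>)) (c - b) c x
      \<le> hg_series (c - (a + \<delta>)) (c - b) c x ^ 2"
    using a bc x \<delta> by (intro hg_series_log_concave_reflected) auto
  ultimately show ?thesis using log_concave_scaled by simp
next
  assume a: "a + 2 * \<delta> \<le> c" and x: "x < 0" and bc: "c < b" "0 < c"
  define y where "y = x / (x - 1)"
  have y: "0 < y" "y < 1" using Pfaff_variable_bounds[OF x] by (simp_all add: y_def)
  have "hyp2f1 \<alpha> b c x = (1 - x) powr (-b) * hg_series (c - \<alpha>) b c y" for \<alpha>
    using hyp2f1_neg_eq_Pfaff[OF bc(2) x, of \<alpha> b] by (simp add: y_def)
  moreover have "(1 - x) powr (-b) * (1 - x) powr (-b) = ((1 - x) powr (-b)) ^ 2"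
    by (simp add: power2_eq_square)
  moreover have "hg_series (c - a) b c y * hg_series (c - (a + 2 * \<delta>)) b c y \<le> hg_series (c - (a + \<delta>)) b c y ^ 2"
    using a bc y \<delta> by (intro hg_series_log_concave_reflected) auto
  ultimately show ?thesis using log_concave_scaled by simp
qed

definition hyp2f1_cross_ratio :: "real \<Rightarrow> real \<Rightarrow> real \<Rightarrow> real \<Rightarrow> real \<Rightarrow> real \<Rightarrow> real" where
  "hyp2f1_cross_ratio a a' b c \<delta> x =
     (hyp2f1 (a' + \<delta>) b c x * hyp2f1 a b c x) / (hyp2f1 (a + \<delta>) b c x * hyp2f1 a' b c x)"

lemma hyp2f1_ratio_bounds_unit_interval:
  assumes "0 < \<delta>" "0 < x" "x < 1" "c < b" "0 < c" "a < a'" "0 < a"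
  shows "Gamma (a + \<delta>) * Gamma a' / (Gamma a * Gamma (a' + \<delta>)) < hyp2f1_cross_ratio a a' b c \<delta> x
         \<and> hyp2f1_cross_ratio a a' b c \<delta> x < 1"
  using hg_series_ratio_bounds[of c b x a a' \<delta>] assms
  by (simp add: hyp2f1_cross_ratio_def hyp2f1_eq_hg_series)

lemma hyp2f1_ratio_bounds_unit_interval_reflected:
  assumes \<delta>: "0 < \<delta>" and x: "0 < x" "x < 1" and bc: "0 < c" "b < 0" and a: "a' < c - \<delta>" "a < a'"
  shows "Gamma (c - a - \<delta>) * Gamma (c - a') / (Gamma (c - a) * Gamma (c - a' - \<delta>)) < hyp2f1_cross_ratio a a' b c \<delta> x
         \<and> hyp2f1_cross_ratio a a' b c \<delta> x < 1"
proof -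
  have "hyp2f1 \<alpha> b c x = (1 - x) powr (c - \<alpha> - b) * hg_series (c - \<alpha>) (c - b) c x" for \<alpha>
    using bc x by (intro hyp2f1_eq_Euler) auto
  moreover have "(1 - x) powr (c - (a' + \<delta>) - b) * (1 - x) powr (c - a - b)
      = (1 - x) powr (c - (a + \<delta>) - b) * (1 - x) powr (c - a' - b)"
    by (rule powr_mult_powr_eq) simp
  ultimately show ?thesis
    using hg_series_ratio_bounds_reflected[of c "c - b" x a' \<delta> a] cross_ratio_scaled bc x a \<delta>
    by (simp add: hyp2f1_cross_ratio_def)
qed

lemma hyp2f1_ratio_bounds_negative:
  assumes \<delta>: "0 < \<delta>" and x: "x < 0" and bc: "0 < c" "b < 0" and a: "a < a'" "0 < a"
  shows "Gamma (a + \<delta>) * Gamma a' / (Gamma a * Gamma (a' + \<delta>)) < hyp2f1_cross_ratio a a' b c \<delta> x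
         \<and> hyp2f1_cross_ratio a a' b c \<delta> x < 1"
proof -
  define y C where "y = x / (x - 1)" and "C = (1 - x) powr (-b)"
  have "hyp2f1 \<alpha> b c x = (C * (1 - y) powr (\<alpha> - b)) * hg_series \<alpha> (c - b) c y" for \<alpha>
    using hyp2f1_neg_eq_Pfaff_Euler[OF bc(1) x, of \<alpha> b] by (simp add: y_def C_def)
  moreover have "(C * (1 - y) powr (a' + \<delta> - b)) * (C * (1 - y) powr (a - b))
      = (C * (1 - y) powr (a + \<delta> - b)) * (C * (1 - y) powr (a' - b))"
    using powr_mult_powr_eq[of "a' + \<delta> - b" "a - b" "a + \<delta> - b" "a' - b" "1 - y"] by (simp add: mult_ac)
  moreover have "0 < y" "y < 1" using Pfaff_variable_bounds[OF x] by (simp_all add: y_def)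
  ultimately show ?thesis
    using hg_series_ratio_bounds[of c "c - b" y a a' \<delta>] cross_ratio_scaled bc x a \<delta>
    by (simp add: hyp2f1_cross_ratio_def C_def)
qed

lemma hyp2f1_ratio_bounds_negative_reflected:
  assumes \<delta>: "0 < \<delta>" and x: "x < 0" and bc: "c < b" "0 < c" and a: "a' < c - \<delta>" "a < a'"
  shows "Gamma (c - a - \<delta>) * Gamma (c - a') / (Gamma (c - a) * Gamma (c - a' - \<delta>)) < hyp2f1_cross_ratio a a' b c \<delta> x
         \<and> hyp2f1_cross_ratio a a' b c \<delta> x < 1"
proof -
  define y C where "y = x / (x - 1)" and "C = (1 - x) powr (-b)"
  have "hyp2f1 \<alpha> b c x = C * hg_series (c - \<alpha>) b c y" for \<alpha>
    using hyp2f1_neg_eq_Pfaff[OF bc(2) x, of \<alpha> b] by (simp add: y_def C_def)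
  moreover have "0 < y" "y < 1" using Pfaff_variable_bounds[OF x] by (simp_all add: y_def)
  ultimately show ?thesis
    using hg_series_ratio_bounds_reflected[OF bc _ _ a \<delta>, of y] cross_ratio_scaled[of C C C C] x
    by (simp add: hyp2f1_cross_ratio_def C_def)
qed

lemmas hyp2f1_ratio_bounds =
  hyp2f1_ratio_bounds_unit_interval hyp2f1_ratio_bounds_unit_interval_reflected
  hyp2f1_ratio_bounds_negative hyp2f1_ratio_bounds_negative_reflected

theorem theorem6:
  shows
  \<comment> \<open>(a)\<close>
  "(\<forall>a a' b c \<delta> :: real. a' > a \<and> a \<ge> 0 \<and> b > c \<and> c > 0 \<and> \<delta> > 0 \<longrightarrow>
      (\<exists>d :: nat \<Rightarrow> real.
         (\<forall>x::real. \<bar>x\<bar> < 1 \<longrightarrow>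
            (\<lambda>n. d n * x ^ n) sums
              (hyp2f1 (a + \<delta>) b c x * hyp2f1 a' b c x - hyp2f1 (a' + \<delta>) b c x * hyp2f1 a b c x))
         \<and> d 0 = 0 \<and> d 1 = 0 \<and> (\<forall>n\<ge>2. d n > 0)))
   \<and>
  \<comment> \<open>(b)\<close>
   (\<forall>a b c x \<delta> :: real. \<delta> > 0 \<and>
      ((a \<ge> 0 \<and> 0 < x \<and> x < 1 \<and> b > c \<and> c > 0) \<or>
       (a \<ge> 0 \<and> x < 0 \<and> c > 0 \<and> 0 > b) \<or>
       (a + 2 * \<delta> \<le> c \<and> 0 < x \<and> x < 1 \<and> c > 0 \<and> 0 > b) \<or>
       (a + 2 * \<delta> \<le> c \<and> x < 0 \<and> b > c \<and> c > 0)) \<longrightarrow>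
      hyp2f1 (a + \<delta>) b c x ^ 2 \<ge> hyp2f1 a b c x * hyp2f1 (a + 2 * \<delta>) b c x)
   \<and>
  \<comment> \<open>(c)\<close>
   (\<forall>a a' b c x \<delta> :: real.
      let R = (hyp2f1 (a' + \<delta>) b c x * hyp2f1 a b c x) /
              (hyp2f1 (a + \<delta>) b c x * hyp2f1 a' b c x);
          star = (Gamma (a + \<delta>) * Gamma a' / (Gamma a * Gamma (a' + \<delta>)) < R \<and> R < 1);
          starstar = (Gamma (c - a - \<delta>) * Gamma (c - a') / (Gamma (c - a) * Gamma (c - a' - \<delta>)) < R
                      \<and> R < 1)
      in \<delta> > 0 \<longrightarrow>
         ((0 < x \<and> x < 1 \<and> b > c \<and> c > 0 \<and> a' > a \<and> a > 0 \<longrightarrow> star) \<and>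
          (0 < x \<and> x < 1 \<and> c > 0 \<and> 0 > b \<and> c - \<delta> > a' \<and> a' > a \<longrightarrow> starstar) \<and>
          (x < 0 \<and> c > 0 \<and> 0 > b \<and> a' > a \<and> a > 0 \<longrightarrow> star) \<and>
          (x < 0 \<and> b > c \<and> c > 0 \<and> c - \<delta> > a' \<and> a' > a \<longrightarrow> starstar)))"
  unfolding Let_def hyp2f1_cross_ratio_def[symmetric]
  by (intro conjI allI impI; elim conjE)
    (blast intro: hyp2f1_cross_difference_expansion hyp2f1_log_concave
      hyp2f1_ratio_bounds[THEN conjunct1] hyp2f1_ratio_bounds[THEN conjunct2])+

end
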